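(* For every integer $l\ge0$ there exists $\theta\in\mathcal{S}(\mathbf{R})$ with $\int_{-\infty}^{+\infty}\theta(y)\,dy=1$ such that, with $K(x)=\int_{-\infty}^{x}\theta(y)\,dy$, for all real numbers $h_0$ and $\Delta h\neq0$ and $a=h_0+\frac{\Delta h}{2}$, the shock wave $w(t,x,\varepsilon)=h_0+\Delta h\,K\!\left(\frac{x-at}{\varepsilon}\right)$ is a solution of the Hopf equation $u_t+uu_x=0$ up to $e^{-l}$ in the sense of $\mathbf{R}\langle\varepsilon\rangle$-distributions. Equivalently, $\theta$ satisfies $$\frac12\int_{-\infty}^{+\infty}x^k\theta(x)\,dx=\int_{-\infty}^{+\infty}x^k\theta(x)\Big(\int_{-\infty}^{x}\theta(y)\,dy\Big)dx,\qquad k=0,1,\dots,l-1.$$ Moreover, if $l\ge1$, every shock wave $w=h_0+\Delta h\,K\big(\frac{x-at}{\varepsilon}\big)$ of this form solving the Hopf equation up to $e^{-l}$ satisfies the Rankine--Hugoniot condition $\frac{a-h_0}{\Delta h}=\frac12$.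
   Context: Shock waves: functions $w(t,x,\varepsilon)=h_0+\Delta h\,K\big(\frac{x-at}{\varepsilon}\big)$, $\varepsilon\in(0,1]$, with $h_0,\Delta h,a\in\mathbf{R}$, $\Delta h\ne0$, $K(x)=\int_{-\infty}^x\theta(y)\,dy$, $\theta\in\mathcal{S}(\mathbf{R})$ (Schwartz space), $\int_{-\infty}^{+\infty}\theta=1$. Solution up to $e^{-l}$ in the sense of $\mathbf{R}\langle\varepsilon\rangle$-distributions: a smooth family $w(t,x,\varepsilon)$ is such a solution of $u_t+uu_x=0$ (for $t\in[0,T]$) if for every $t\in[0,T]$ and every $\psi\in\mathcal{S}(\mathbf{R})$ the quantity $I(t,\varepsilon)=\int_{-\infty}^{+\infty}\{w_t+ww_x\}(t,x,\varepsilon)\psi(x)\,dx$ admits an asymptotic expansion $\sum_{k\ge0}\xi_k\varepsilon^k$ as $\varepsilon\to0^+$ (obtained by substituting $x=at+\varepsilon y$ and Taylor-expanding $\psi$) whose coefficients satisfy $\xi_k=0$ for all $k<l$; equivalently, this formal series in the field of Laurent series $\mathbf{R}\langle\varepsilon\rangle$ has non-Archimedean norm $|\cdot|_\nu\le e^{-l}$, where $|x|_\nu=e^{-\nu(x)}$ and $\nu(\sum_{n\ge0}\xi_{n+k}\varepsilon^{n+k})=k$ for $\xi_k\ne0$, $\nu(0)=\infty$. *)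

theory Defs
  imports "HOL-Analysis.Analysis" "HOL-Library.Landau_Symbols"
begin

definition schwartz :: "(real \<Rightarrow> real) \<Rightarrow> bool" where
  "schwartz f \<longleftrightarrow>
     (\<forall>n x. ((deriv ^^ n) f) differentiable (at x)) \<and>
     (\<forall>m n. \<exists>C. \<forall>x. \<bar>x\<bar> ^ m * \<bar>(deriv ^^ n) f x\<bar> \<le> C)"

definition Kfun :: "(real \<Rightarrow> real) \<Rightarrow> real \<Rightarrow> real" where
  "Kfun \<theta> x = integral {..x} \<theta>"

definition shock_wave ::
  "(real \<Rightarrow> real) \<Rightarrow> real \<Rightarrow> real \<Rightarrow> real \<Rightarrow> real \<Rightarrow> real \<Rightarrow> real \<Rightarrow> real" where
  "shock_wave \<theta> h0 dh a t x \<epsilon> = h0 + dh * Kfun \<theta> ((x - a * t) / \<epsilon>)"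

definition has_asymp_expansion :: "(real \<Rightarrow> real) \<Rightarrow> (nat \<Rightarrow> real) \<Rightarrow> bool" where
  "has_asymp_expansion I \<xi> \<longleftrightarrow>
     (\<forall>N. (\<lambda>\<epsilon>. I \<epsilon> - (\<Sum>k<N. \<xi> k * \<epsilon> ^ k)) \<in> O[at_right 0](\<lambda>\<epsilon>. \<epsilon> ^ N))"

definition hopf_pairing ::
  "(real \<Rightarrow> real \<Rightarrow> real \<Rightarrow> real) \<Rightarrow> (real \<Rightarrow> real) \<Rightarrow> real \<Rightarrow> real \<Rightarrow> real" where
  "hopf_pairing w \<psi> t \<epsilon> =
     integral UNIV (\<lambda>x. (deriv (\<lambda>s. w s x \<epsilon>) t + w t x \<epsilon> * deriv (\<lambda>y. w t y \<epsilon>) x) * \<psi> x)"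

definition hopf_solution_upto ::
  "(real \<Rightarrow> real \<Rightarrow> real \<Rightarrow> real) \<Rightarrow> real \<Rightarrow> nat \<Rightarrow> bool" where
  "hopf_solution_upto w T l \<longleftrightarrow>
     (\<forall>t\<in>{0..T}. \<forall>\<psi>. schwartz \<psi> \<longrightarrow>
        (\<exists>\<xi>. has_asymp_expansion (hopf_pairing w \<psi> t) \<xi> \<and> (\<forall>k<l. \<xi> k = 0)))"

end

(*
  The substitution x = a t + eps y turns the pairing of w_t + w w_x with a test function psi into
  the integral of D(y) psi(a t + eps y), where D = dh theta (h0 - a + dh K). Expanding psi by
  Taylor's formula, the k-th coefficient is psi^(k)(a t) / k! times the k-th moment of D, and testing
  with psi(x) = x^k exp(-x^2) shows conversely that these moments must vanish. Since the integral of
  theta K is 1/2, the zeroth moment gives the Rankine-Hugoniot condition; for a = h0 + dh/2 the k-th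
  moment of D is dh^2 times the defect of the k-th moment condition.

  For existence take theta = A' with A(y) = (y/2) sqrt(F(y) / Q(y)), Q = lam^2 y^2 + exp(-lam^2 y^2)
  and F = lam^2 + rho Q, so that K = A + 1/2. Integration by parts reduces the k-th moment condition
  to the vanishing of the (k-1)-st moment of A^2 - 1/4 = (y^2 rho - exp(-lam^2 y^2) / Q) / 4. For rho a
  combination of derivatives of the Gaussian this is a triangular linear system for the coefficients,
  with right-hand side O(1/lam); for large lam the coefficients are small, so F >= 1/2 and theta is a
  Schwartz function.
*)

theory Submission
  imports Defs
begin

section \<open>Rapidly decreasing functions\<close>

definition rapidly_decreasing :: "(real \<Rightarrow> real) \<Rightarrow> bool" where
  "rapidly_decreasing f \<longleftrightarrow> continuous_on UNIV f \<and> (\<forall>m::nat. \<exists>C. \<forall>x. \<bar>x\<bar> ^ m * \<bar>f x\<bar> \<le> C)"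

lemma rapidly_decreasingD:
  assumes "rapidly_decreasing f"
  shows "continuous_on UNIV f" "\<exists>C. \<forall>x. \<bar>x\<bar> ^ m * \<bar>f x\<bar> \<le> C"
  using assms by (auto simp: rapidly_decreasing_def)

lemma integrable_inverse_1_plus_square: "integrable lborel (\<lambda>x::real. 1 / (1 + x\<^sup>2))"
proof -
  have "set_integrable lborel (einterval (-\<infinity>) \<infinity>) (\<lambda>x::real. 1 / (1 + x\<^sup>2))"
  proof (rule interval_integral_FTC_nonneg(1)[where F = arctan and A = "-pi/2" and B = "pi/2"])
    fix x :: real
    show "DERIV arctan x :> 1 / (1 + x\<^sup>2)"
      using DERIV_arctan[of x] by (simp add: divide_inverse)
    show "isCont (\<lambda>x::real. 1 / (1 + x\<^sup>2)) x"
      by (intro continuous_intros) (metis add_pos_nonneg less_irrefl zero_le_power2 zero_less_one)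
  next
    show "AE x in lborel. - \<infinity> < ereal x \<longrightarrow> ereal x < \<infinity> \<longrightarrow> 0 \<le> 1 / (1 + x\<^sup>2)"
      by (auto intro!: AE_I2 simp: add_nonneg_nonneg)
    show "((arctan \<circ> real_of_ereal) \<longlongrightarrow> - pi / 2) (at_right (- \<infinity>))"
      unfolding ereal_tendsto_simps1 using tendsto_arctan_at_bot by simp
    show "((arctan \<circ> real_of_ereal) \<longlongrightarrow> pi / 2) (at_left \<infinity>)"
      unfolding ereal_tendsto_simps1 by (rule tendsto_arctan_at_top)
  qed simp
  then show ?thesis by (simp add: set_integrable_def)
qed

lemma rapidly_decreasing_weighted_bound:
  assumes "rapidly_decreasing f"
  shows "\<exists>C. \<forall>x. (1 + x\<^sup>2) * \<bar>f x\<bar> \<le> C"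
proof -
  obtain C0 C2 where C0: "\<And>x. \<bar>x\<bar> ^ 0 * \<bar>f x\<bar> \<le> C0" and C2: "\<And>x. \<bar>x\<bar> ^ 2 * \<bar>f x\<bar> \<le> C2"
    using rapidly_decreasingD(2)[OF assms] by meson
  have "(1 + x\<^sup>2) * \<bar>f x\<bar> \<le> C0 + C2" for x
    using C0[of x] C2[of x] by (simp add: algebra_simps power2_abs)
  then show ?thesis by blast
qed

lemma rapidly_decreasing_integrable:
  assumes "rapidly_decreasing f"
  shows "integrable lborel f"
proof -
  obtain C where C: "\<And>x. (1 + x\<^sup>2) * \<bar>f x\<bar> \<le> C"
    using rapidly_decreasing_weighted_bound[OF assms] by blast
  have bound: "norm (f x) \<le> norm (C * (1 / (1 + x\<^sup>2)))" for x
  proof -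
    have "\<bar>f x\<bar> \<le> C * (1 / (1 + x\<^sup>2))"
      using C[of x] by (simp add: field_simps add_pos_nonneg)
    then show ?thesis by (metis abs_ge_self order_trans real_norm_def)
  qed
  show ?thesis
  proof (rule Bochner_Integration.integrable_bound[OF _ _ AE_I2[OF bound]])
    show "integrable lborel (\<lambda>x. C * (1 / (1 + x\<^sup>2)))"
      by (rule integrable_mult_right[OF integrable_inverse_1_plus_square])
    show "f \<in> borel_measurable lborel"
      using borel_measurable_continuous_onI[OF rapidly_decreasingD(1)[OF assms]] by simp
  qed
qed

lemma integrable_lborel_set_integral_eq_integral:
  fixes f :: "real \<Rightarrow> real"
  assumes "integrable lborel f" "S \<in> sets borel"
  shows "set_integrable lborel S f" "f integrable_on S"
    "set_lebesgue_integral lborel S f = integral S f"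
proof -
  show si: "set_integrable lborel S f"
    unfolding set_integrable_def using assms by (intro integrable_mult_indicator) auto
  show "f integrable_on S" "set_lebesgue_integral lborel S f = integral S f"
    using set_borel_integral_eq_integral[OF si] by auto
qed

lemma rapidly_decreasing_integrable_on:
  "rapidly_decreasing f \<Longrightarrow> S \<in> sets borel \<Longrightarrow> f integrable_on S"
  using integrable_lborel_set_integral_eq_integral(2) rapidly_decreasing_integrable by blast

lemma rapidly_decreasing_has_integral:
  "rapidly_decreasing f \<Longrightarrow> (f has_integral integral UNIV f) UNIV"
  using rapidly_decreasing_integrable_on[of f UNIV] by (simp add: has_integral_integral)

lemma rapidly_decreasing_tendsto_0:
  assumes "rapidly_decreasing f"
  shows "(f \<longlongrightarrow> 0) at_top" "(f \<longlongrightarrow> 0) at_bot"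
proof -
  obtain C where C: "\<And>x. \<bar>x\<bar> ^ 1 * \<bar>f x\<bar> \<le> C"
    using rapidly_decreasingD(2)[OF assms] by blast
  have bound: "norm (f x) \<le> C / \<bar>x\<bar>" if "x \<noteq> 0" for x
    using C[of x] that by (simp add: field_simps)
  have abs_at_bot: "filterlim (\<lambda>x::real. \<bar>x\<bar>) at_top at_bot"
    using filterlim_compose[OF filterlim_abs_real filterlim_uminus_at_top_at_bot] by simp
  have "((\<lambda>x::real. C / \<bar>x\<bar>) \<longlongrightarrow> 0) at_top" "((\<lambda>x::real. C / \<bar>x\<bar>) \<longlongrightarrow> 0) at_bot"
    using filterlim_abs_real abs_at_bot
    by (auto intro!: tendsto_divide_0[OF tendsto_const] filterlim_at_top_imp_at_infinity)
  moreover have "eventually (\<lambda>x. norm (f x) \<le> C / \<bar>x\<bar>) at_top"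
    using eventually_gt_at_top[of 0] by eventually_elim (rule bound, simp)
  moreover have "eventually (\<lambda>x. norm (f x) \<le> C / \<bar>x\<bar>) at_bot"
    using eventually_le_at_bot[of "-1"] by eventually_elim (rule bound, simp)
  ultimately show "(f \<longlongrightarrow> 0) at_top" "(f \<longlongrightarrow> 0) at_bot"
    by (metis Lim_null_comparison)+
qed

lemma rapidly_decreasing_mult_bounded:
  assumes f: "rapidly_decreasing f" and g: "continuous_on UNIV g" "\<And>x. \<bar>g x\<bar> \<le> B"
  shows "rapidly_decreasing (\<lambda>x. g x * f x)" "rapidly_decreasing (\<lambda>x. f x * g x)"
proof -
  have "\<exists>C. \<forall>x. \<bar>x\<bar> ^ m * \<bar>g x * f x\<bar> \<le> C" for m
  proof -
    obtain C where C: "\<And>x. \<bar>x\<bar> ^ m * \<bar>f x\<bar> \<le> C" using rapidly_decreasingD(2)[OF f] by blast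
    have "\<bar>x\<bar> ^ m * \<bar>g x * f x\<bar> \<le> B * C" for x
    proof -
      have "\<bar>x\<bar> ^ m * \<bar>g x * f x\<bar> = \<bar>g x\<bar> * (\<bar>x\<bar> ^ m * \<bar>f x\<bar>)" by (simp add: abs_mult)
      also have "\<dots> \<le> B * C" using g(2)[of x] C[of x] by (intro mult_mono) auto
      finally show ?thesis .
    qed
    then show ?thesis by blast
  qed
  then show "rapidly_decreasing (\<lambda>x. g x * f x)"
    using f g(1) by (auto simp: rapidly_decreasing_def intro: continuous_intros)
  then show "rapidly_decreasing (\<lambda>x. f x * g x)" by (simp add: mult.commute)
qed

lemma rapidly_decreasing_cmult: "rapidly_decreasing f \<Longrightarrow> rapidly_decreasing (\<lambda>x. c * f x)"
  by (rule rapidly_decreasing_mult_bounded[where B = "\<bar>c\<bar>"]) auto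

lemma rapidly_decreasing_mult_power:
  assumes "rapidly_decreasing f"
  shows "rapidly_decreasing (\<lambda>x. x ^ k * f x)"
proof -
  have "\<exists>C. \<forall>x. \<bar>x\<bar> ^ m * \<bar>x ^ k * f x\<bar> \<le> C" for m
  proof -
    obtain C where "\<forall>x. \<bar>x\<bar> ^ (m + k) * \<bar>f x\<bar> \<le> C" using rapidly_decreasingD(2)[OF assms] by blast
    then show ?thesis by (auto simp: abs_mult power_add power_abs mult.assoc)
  qed
  then show ?thesis
    using rapidly_decreasingD(1)[OF assms]
    by (auto simp: rapidly_decreasing_def intro!: continuous_on_mult continuous_on_power continuous_on_id)
qed

lemma rapidly_decreasing_add:
  assumes f: "rapidly_decreasing f" and g: "rapidly_decreasing g"
  shows "rapidly_decreasing (\<lambda>x. f x + g x)"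
proof -
  have "\<exists>C. \<forall>x. \<bar>x\<bar> ^ m * \<bar>f x + g x\<bar> \<le> C" for m
  proof -
    obtain C D where C: "\<And>x. \<bar>x\<bar> ^ m * \<bar>f x\<bar> \<le> C" and D: "\<And>x. \<bar>x\<bar> ^ m * \<bar>g x\<bar> \<le> D"
      using rapidly_decreasingD(2)[OF f] rapidly_decreasingD(2)[OF g] by meson
    have "\<bar>x\<bar> ^ m * \<bar>f x + g x\<bar> \<le> C + D" for x
    proof -
      have "\<bar>x\<bar> ^ m * \<bar>f x + g x\<bar> \<le> \<bar>x\<bar> ^ m * (\<bar>f x\<bar> + \<bar>g x\<bar>)"
        by (intro mult_left_mono abs_triangle_ineq) auto
      then show ?thesis using C[of x] D[of x] by (simp add: algebra_simps)
    qed
    then show ?thesis by blast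
  qed
  then show ?thesis
    using f g by (auto simp: rapidly_decreasing_def intro: continuous_intros)
qed

lemma rapidly_decreasing_abs: "rapidly_decreasing f \<Longrightarrow> rapidly_decreasing (\<lambda>x. \<bar>f x\<bar>)"
  by (auto simp: rapidly_decreasing_def intro: continuous_intros)

lemma rapidly_decreasing_has_integral_FTC:
  assumes f: "rapidly_decreasing f" and F: "\<And>x. (F has_real_derivative f x) (at x)"
    and A: "(F \<longlongrightarrow> A) at_bot" and B: "(F \<longlongrightarrow> B) at_top"
  shows "(f has_integral (B - A)) UNIV"
proof -
  have i: "integrable lborel f" using rapidly_decreasing_integrable[OF f] .
  have "(LBINT x=-\<infinity>..\<infinity>. f x) = B - A"
  proof (rule interval_integral_FTC_integrable)
    fix x
    show "(F has_vector_derivative f x) (at x)"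
      using F[of x] by (simp add: has_real_derivative_iff_has_vector_derivative)
    show "isCont f x"
      using rapidly_decreasingD(1)[OF f] by (simp add: continuous_on_eq_continuous_at)
  next
    show "set_integrable lborel (einterval (- \<infinity>) \<infinity>) f"
      using i by (simp add: set_integrable_def)
    show "((F \<circ> real_of_ereal) \<longlongrightarrow> A) (at_right (- \<infinity>))"
      unfolding ereal_tendsto_simps1 by (rule A)
    show "((F \<circ> real_of_ereal) \<longlongrightarrow> B) (at_left \<infinity>)"
      unfolding ereal_tendsto_simps1 by (rule B)
  qed simp
  moreover have "(LBINT x=-\<infinity>..\<infinity>. f x) = integral UNIV f"
    using integrable_lborel_set_integral_eq_integral(3)[OF i, of UNIV]
    by (simp add: interval_lebesgue_integral_def)
  ultimately show ?thesis
    using rapidly_decreasing_has_integral[OF f] by simp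
qed

section \<open>The primitive \<open>Kfun\<close> of a rapidly decreasing function\<close>

context
  fixes \<theta> :: "real \<Rightarrow> real"
  assumes \<theta>: "rapidly_decreasing \<theta>"
begin

lemma Kfun_split:
  assumes "c \<le> x"
  shows "Kfun \<theta> x = integral {..c} \<theta> + integral {c..x} \<theta>"
proof -
  have "(\<theta> has_integral (integral {..c} \<theta> + integral {c..x} \<theta>)) ({..c} \<union> {c..x})"
  proof (rule has_integral_Un)
    show "(\<theta> has_integral integral {..c} \<theta>) {..c}" "(\<theta> has_integral integral {c..x} \<theta>) {c..x}"
      using rapidly_decreasing_integrable_on[OF \<theta>] by (simp_all add: has_integral_integral)
    have "{..c} \<inter> {c..x} = {c}" using assms by auto
    then show "negligible ({..c} \<inter> {c..x})" by simp
  qed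
  moreover have "{..c} \<union> {c..x} = {..x}" using assms by auto
  ultimately show ?thesis unfolding Kfun_def by (simp add: integral_unique)
qed

lemma Kfun_has_real_derivative: "(Kfun \<theta> has_real_derivative \<theta> x) (at x)"
proof -
  let ?c = "x - 1"
  have "continuous_on {?c..x+1} \<theta>"
    using rapidly_decreasingD(1)[OF \<theta>] by (rule continuous_on_subset) simp
  then have "((\<lambda>u. integral {?c..u} \<theta>) has_real_derivative \<theta> x) (at x within {?c..x+1})"
    by (rule integral_has_real_derivative) simp
  moreover have "at x within {?c..x+1} = at x"
    by (rule at_within_interior) simp
  ultimately have "((\<lambda>u. integral {..?c} \<theta> + integral {?c..u} \<theta>) has_real_derivative \<theta> x) (at x)"
    using DERIV_add[OF DERIV_const] by fastforce
  then show ?thesis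
  proof (rule has_field_derivative_transform_within_open)
    show "integral {..?c} \<theta> + integral {?c..y} \<theta> = Kfun \<theta> y" if "y \<in> {?c<..}" for y
      using Kfun_split[of ?c y] that by simp
  qed auto
qed

lemma continuous_on_Kfun: "continuous_on UNIV (Kfun \<theta>)"
  using Kfun_has_real_derivative by (meson DERIV_continuous continuous_at_imp_continuous_on)

lemma Kfun_tendsto_at_bot: "(Kfun \<theta> \<longlongrightarrow> 0) at_bot"
proof -
  have i: "integrable lborel \<theta>" using rapidly_decreasing_integrable[OF \<theta>] .
  note set_integral = integrable_lborel_set_integral_eq_integral[OF i]
  have "((\<lambda>a. set_lebesgue_integral lborel {a..0} \<theta>) \<longlongrightarrow> set_lebesgue_integral lborel {..0::real} \<theta>) at_bot"
    by (rule tendsto_set_lebesgue_integral_at_bot) (simp_all add: set_integral(1))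
  then have "((\<lambda>a. integral {a..0} \<theta>) \<longlongrightarrow> integral {..0} \<theta>) at_bot"
    by (simp add: set_integral(3))
  from tendsto_diff[OF tendsto_const[of "integral {..0} \<theta>"] this]
  have "((\<lambda>a. integral {..0} \<theta> - integral {a..0} \<theta>) \<longlongrightarrow> 0) at_bot"
    by simp
  moreover have "eventually (\<lambda>a. integral {..0} \<theta> - integral {a..0} \<theta> = Kfun \<theta> a) at_bot"
    using eventually_le_at_bot[of "0::real"]
    by eventually_elim (use Kfun_split[of _ 0] in \<open>simp add: Kfun_def\<close>)
  ultimately show ?thesis by (rule Lim_transform_eventually)
qed

lemma Kfun_tendsto_at_top: "(Kfun \<theta> \<longlongrightarrow> integral UNIV \<theta>) at_top"
proof -
  have i: "integrable lborel \<theta>" using rapidly_decreasing_integrable[OF \<theta>] .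
  note set_integral = integrable_lborel_set_integral_eq_integral[OF i]
  have "((\<lambda>b. set_lebesgue_integral lborel {0..b} \<theta>) \<longlongrightarrow> set_lebesgue_integral lborel {0::real..} \<theta>) at_top"
    by (rule tendsto_set_lebesgue_integral_at_top) (simp_all add: set_integral(1))
  then have "((\<lambda>b. integral {..0} \<theta> + integral {0..b} \<theta>) \<longlongrightarrow> integral {..0} \<theta> + integral {0..} \<theta>) at_top"
    using tendsto_add[OF tendsto_const] by (simp add: set_integral(3))
  moreover have "eventually (\<lambda>b. integral {..0} \<theta> + integral {0..b} \<theta> = Kfun \<theta> b) at_top"
    using eventually_ge_at_top[of "0::real"] by eventually_elim (simp add: Kfun_split)
  moreover have "integral {..0} \<theta> + integral {0..} \<theta> = integral UNIV \<theta>"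
  proof -
    have "(\<theta> has_integral (integral {..0} \<theta> + integral {0..} \<theta>)) ({..0} \<union> {0..})"
    proof (rule has_integral_Un)
      show "(\<theta> has_integral integral {..0} \<theta>) {..0}" "(\<theta> has_integral integral {0..} \<theta>) {0..}"
        using rapidly_decreasing_integrable_on[OF \<theta>] by (simp_all add: has_integral_integral)
    qed (auto intro: negligible_subset[of "{0}"])
    moreover have "{..0::real} \<union> {0..} = UNIV" by auto
    ultimately show ?thesis by (simp add: integral_unique)
  qed
  ultimately show ?thesis using Lim_transform_eventually by fastforce
qed

lemma abs_Kfun_le: "\<bar>Kfun \<theta> x\<bar> \<le> integral UNIV (\<lambda>y. \<bar>\<theta> y\<bar>)"
proof -
  have abs_\<theta>: "rapidly_decreasing (\<lambda>y. \<bar>\<theta> y\<bar>)" using rapidly_decreasing_abs[OF \<theta>] .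
  have "\<bar>Kfun \<theta> x\<bar> \<le> integral {..x} (\<lambda>y. \<bar>\<theta> y\<bar>)"
    unfolding Kfun_def
    using integral_norm_bound_integral[of \<theta> "{..x}" "\<lambda>y. \<bar>\<theta> y\<bar>"]
      rapidly_decreasing_integrable_on[OF \<theta>] rapidly_decreasing_integrable_on[OF abs_\<theta>] by auto
  also have "\<dots> \<le> integral UNIV (\<lambda>y. \<bar>\<theta> y\<bar>)"
    by (rule integral_subset_le) (auto intro: rapidly_decreasing_integrable_on[OF abs_\<theta>])
  finally show ?thesis .
qed

lemma rapidly_decreasing_mult_Kfun: "rapidly_decreasing (\<lambda>x. \<theta> x * Kfun \<theta> x)"
  by (rule rapidly_decreasing_mult_bounded(2)[OF \<theta> continuous_on_Kfun abs_Kfun_le])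

end

section \<open>Smooth functions of Gaussian decay\<close>

inductive slowly_increasing :: "(real \<Rightarrow> real) \<Rightarrow> bool" where
  slowly_increasing_const: "slowly_increasing (\<lambda>x. c)"
| slowly_increasing_ident: "slowly_increasing (\<lambda>x. x)"
| slowly_increasing_exp: "0 < b \<Longrightarrow> slowly_increasing (\<lambda>x. exp (- b * x\<^sup>2 + d * x))"
| slowly_increasing_add:
    "slowly_increasing f \<Longrightarrow> slowly_increasing g \<Longrightarrow> slowly_increasing (\<lambda>x. f x + g x)"
| slowly_increasing_mult:
    "slowly_increasing f \<Longrightarrow> slowly_increasing g \<Longrightarrow> slowly_increasing (\<lambda>x. f x * g x)"
| slowly_increasing_inverse_sqrt:
    "slowly_increasing f \<Longrightarrow> 0 < \<delta> \<Longrightarrow> (\<And>x. \<delta> \<le> f x) \<Longrightarrow> slowly_increasing (\<lambda>x. 1 / sqrt (f x))"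

lemma slowly_increasing_has_real_derivative:
  "slowly_increasing f \<Longrightarrow> \<exists>f'. slowly_increasing f' \<and> (\<forall>x. (f has_real_derivative f' x) (at x))"
proof (induction rule: slowly_increasing.induct)
  case (slowly_increasing_const c)
  show ?case by (intro exI[of _ "\<lambda>x. 0"]) (auto intro: slowly_increasing.intros)
next
  case slowly_increasing_ident
  show ?case by (intro exI[of _ "\<lambda>x. 1"]) (auto intro: slowly_increasing.intros)
next
  case (slowly_increasing_exp b d)
  let ?g = "\<lambda>x. exp (- b * x\<^sup>2 + d * x) * ((- 2 * b) * x + d)"
  have "slowly_increasing ?g" using slowly_increasing_exp by (intro slowly_increasing.intros) auto
  moreover have "((\<lambda>x. exp (- b * x\<^sup>2 + d * x)) has_real_derivative ?g x) (at x)" for x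
    by (auto intro!: derivative_eq_intros simp: power2_eq_square algebra_simps)
  ultimately show ?case by blast
next
  case (slowly_increasing_add f g)
  then obtain f' g' where "slowly_increasing f'" "slowly_increasing g'"
    "\<And>x. (f has_real_derivative f' x) (at x)" "\<And>x. (g has_real_derivative g' x) (at x)" by blast
  then show ?case
    by (intro exI[of _ "\<lambda>x. f' x + g' x"]) (auto intro: slowly_increasing.intros DERIV_add)
next
  case (slowly_increasing_mult f g)
  then obtain f' g' where "slowly_increasing f'" "slowly_increasing g'"
    and f': "\<And>x. (f has_real_derivative f' x) (at x)" and g': "\<And>x. (g has_real_derivative g' x) (at x)"
    by blast
  moreover have "((\<lambda>x. f x * g x) has_real_derivative f' x * g x + f x * g' x) (at x)" for x
    using DERIV_mult[OF f' g'] by (simp add: algebra_simps)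
  ultimately show ?case
    by (intro exI[of _ "\<lambda>x. f' x * g x + f x * g' x"])
      (auto intro!: slowly_increasing.intros slowly_increasing_mult.hyps)
next
  case (slowly_increasing_inverse_sqrt f \<delta>)
  then obtain f' where f': "slowly_increasing f'" "\<And>x. (f has_real_derivative f' x) (at x)" by blast
  let ?h = "\<lambda>x. 1 / sqrt (f x)"
  let ?g = "\<lambda>x. (- 1 / 2 * f' x) * (?h x * ?h x * ?h x)"
  have h: "slowly_increasing ?h"
    using slowly_increasing_inverse_sqrt.hyps by (intro slowly_increasing.intros) auto
  have "slowly_increasing ?g"
    by (intro slowly_increasing_mult slowly_increasing_const f'(1) h)
  moreover have "(?h has_real_derivative ?g x) (at x)" for x
  proof -
    have pos: "0 < f x"
      using slowly_increasing_inverse_sqrt.hyps(2) slowly_increasing_inverse_sqrt.hyps(3)[of x] by linarith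
    have "(?h has_real_derivative (- (f' x * inverse (sqrt (f x)) / 2) / (sqrt (f x))\<^sup>2)) (at x)"
      using pos f'(2)[of x] by (auto intro!: derivative_eq_intros simp: power2_eq_square)
    moreover have "- (f' x * inverse (sqrt (f x)) / 2) / (sqrt (f x))\<^sup>2 = ?g x"
      using pos by (simp add: field_simps power2_eq_square)
    ultimately show ?thesis by simp
  qed
  ultimately show ?case by blast
qed

lemma slowly_increasing_differentiable: "slowly_increasing f \<Longrightarrow> f differentiable (at x)"
  using slowly_increasing_has_real_derivative real_differentiable_def by blast

lemma slowly_increasing_continuous_on: "slowly_increasing f \<Longrightarrow> continuous_on UNIV f"
  by (meson slowly_increasing_differentiable continuous_at_imp_continuous_on
      differentiable_imp_continuous_within)

lemma slowly_increasing_power: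
  "slowly_increasing f \<Longrightarrow> slowly_increasing (\<lambda>x. f x ^ n)"
  by (induction n) (auto intro: slowly_increasing.intros)

lemma slowly_increasing_inverse:
  assumes "slowly_increasing f" "0 < \<delta>" "\<And>x. \<delta> \<le> f x"
  shows "slowly_increasing (\<lambda>x. 1 / f x)"
proof -
  have "slowly_increasing (\<lambda>x. 1 / sqrt (f x) * (1 / sqrt (f x)))"
    using assms by (intro slowly_increasing.intros)
  moreover have "1 / sqrt (f x) * (1 / sqrt (f x)) = 1 / f x" for x
    using assms(2) assms(3)[of x] by simp
  ultimately show ?thesis by simp
qed

lemma slowly_increasing_sqrt:
  assumes "slowly_increasing f" "0 < \<delta>" "\<And>x. \<delta> \<le> f x"
  shows "slowly_increasing (\<lambda>x. sqrt (f x))"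
proof -
  have "slowly_increasing (\<lambda>x. f x * (1 / sqrt (f x)))"
    using assms by (intro slowly_increasing.intros)
  moreover have "f x * (1 / sqrt (f x)) = sqrt (f x)" for x
    using assms(2) assms(3)[of x] by (simp add: real_div_sqrt)
  ultimately show ?thesis by simp
qed

lemma slowly_increasing_polynomial_bound:
  "slowly_increasing f \<Longrightarrow> \<exists>C N. \<forall>x. \<bar>f x\<bar> \<le> C * (1 + \<bar>x\<bar>) ^ N"
proof (induction rule: slowly_increasing.induct)
  case (slowly_increasing_const c)
  show ?case by (intro exI[of _ "\<bar>c\<bar>"] exI[of _ 0]) auto
next
  case slowly_increasing_ident
  show ?case by (intro exI[of _ 1] exI[of _ 1]) auto
next
  case (slowly_increasing_exp b d)
  have "\<bar>exp (- b * x\<^sup>2 + d * x)\<bar> \<le> exp (d\<^sup>2 / (4 * b)) * (1 + \<bar>x\<bar>) ^ 0" for x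
  proof -
    have "b * x\<^sup>2 - d * x + d\<^sup>2 / (4 * b) = b * (x - d / (2 * b))\<^sup>2"
      using slowly_increasing_exp by (simp add: field_simps power2_eq_square)
    moreover have "0 \<le> b * (x - d / (2 * b))\<^sup>2" using slowly_increasing_exp by simp
    ultimately show ?thesis by simp
  qed
  then show ?case by blast
next
  case (slowly_increasing_add f g)
  then obtain C1 N1 C2 N2 where f: "\<And>x. \<bar>f x\<bar> \<le> C1 * (1 + \<bar>x\<bar>) ^ N1"
    and g: "\<And>x. \<bar>g x\<bar> \<le> C2 * (1 + \<bar>x\<bar>) ^ N2" by blast
  have "\<bar>f x + g x\<bar> \<le> (\<bar>C1\<bar> + \<bar>C2\<bar>) * (1 + \<bar>x\<bar>) ^ (N1 + N2)" for x
  proof -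
    have mono: "(1 + \<bar>x\<bar>) ^ N \<le> (1 + \<bar>x\<bar>) ^ (N1 + N2)" if "N \<le> N1 + N2" for N
      using that by (intro power_increasing) auto
    have "\<bar>f x\<bar> \<le> \<bar>C1\<bar> * (1 + \<bar>x\<bar>) ^ (N1 + N2)" "\<bar>g x\<bar> \<le> \<bar>C2\<bar> * (1 + \<bar>x\<bar>) ^ (N1 + N2)"
      using f[of x] g[of x] mono[of N1] mono[of N2]
      by (auto intro: order_trans[OF _ mult_mono[OF abs_ge_self]])
    then show ?thesis using abs_triangle_ineq[of "f x" "g x"] by (simp add: distrib_right)
  qed
  then show ?case by blast
next
  case (slowly_increasing_mult f g)
  then obtain C1 N1 C2 N2 where f: "\<And>x. \<bar>f x\<bar> \<le> C1 * (1 + \<bar>x\<bar>) ^ N1"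
    and g: "\<And>x. \<bar>g x\<bar> \<le> C2 * (1 + \<bar>x\<bar>) ^ N2" by blast
  have "\<bar>f x * g x\<bar> \<le> (C1 * C2) * (1 + \<bar>x\<bar>) ^ (N1 + N2)" for x
  proof -
    have "\<bar>f x * g x\<bar> \<le> (C1 * (1 + \<bar>x\<bar>) ^ N1) * (C2 * (1 + \<bar>x\<bar>) ^ N2)"
      unfolding abs_mult using f[of x] g[of x] by (intro mult_mono) (auto intro: order_trans[OF abs_ge_zero])
    then show ?thesis by (simp add: power_add algebra_simps)
  qed
  then show ?case by blast
next
  case (slowly_increasing_inverse_sqrt f \<delta>)
  have "\<bar>1 / sqrt (f x)\<bar> \<le> (1 / sqrt \<delta>) * (1 + \<bar>x\<bar>) ^ 0" for x
    using slowly_increasing_inverse_sqrt.hyps(2) slowly_increasing_inverse_sqrt.hyps(3)[of x] by (simp add: frac_le)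
  then show ?case by blast
qed

lemma power_le_exp:
  assumes "0 \<le> t"
  shows "t ^ M \<le> real M ^ M * exp t"
proof (cases "M = 0")
  case False
  have "(t / real M) ^ M \<le> (1 + t / real M) ^ M"
    using assms by (intro power_mono) auto
  also have "\<dots> \<le> exp t"
    using False assms by (intro exp_ge_one_plus_x_over_n_power_n) auto
  finally show ?thesis
    using False by (simp add: power_divide divide_le_eq mult.commute)
qed (use assms in simp)

lemma polynomial_mult_gaussian_bounded:
  fixes a :: real
  assumes "0 < a"
  shows "\<exists>C. \<forall>x. (1 + \<bar>x\<bar>) ^ M * exp (- a * x\<^sup>2) \<le> C"
proof -
  have "(1 + \<bar>x\<bar>) ^ M * exp (- a * x\<^sup>2) \<le> 2 ^ M * (1 + real M ^ M / a ^ M)" for x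
  proof -
    have max_le: "max 1 \<bar>x\<bar> ^ M \<le> 1 + (x\<^sup>2) ^ M"
    proof (cases "\<bar>x\<bar> \<le> 1")
      case False
      then have "\<bar>x\<bar> * 1 \<le> \<bar>x\<bar> * \<bar>x\<bar>" by (intro mult_left_mono) auto
      then have "\<bar>x\<bar> \<le> x\<^sup>2" by (simp add: power2_eq_square)
      then have "\<bar>x\<bar> ^ M \<le> (x\<^sup>2) ^ M" by (intro power_mono) auto
      then show ?thesis using False by (simp add: max_def)
    qed (simp add: max_def)
    have "(1 + \<bar>x\<bar>) ^ M \<le> (2 * max 1 \<bar>x\<bar>) ^ M" by (intro power_mono) auto
    also have "\<dots> = 2 ^ M * max 1 \<bar>x\<bar> ^ M" by (simp add: power_mult_distrib)
    also have "\<dots> \<le> 2 ^ M * (1 + (x\<^sup>2) ^ M)" using max_le by (intro mult_left_mono) auto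
    finally have poly: "(1 + \<bar>x\<bar>) ^ M \<le> 2 ^ M * (1 + (x\<^sup>2) ^ M)" .
    have gauss: "(x\<^sup>2) ^ M * exp (- a * x\<^sup>2) \<le> real M ^ M / a ^ M"
    proof -
      have "a ^ M * (x\<^sup>2) ^ M \<le> real M ^ M * exp (a * x\<^sup>2)"
        using power_le_exp[of "a * x\<^sup>2" M] assms by (simp add: power_mult_distrib)
      then have "(x\<^sup>2) ^ M \<le> real M ^ M * exp (a * x\<^sup>2) / a ^ M"
        using assms by (simp add: le_divide_eq mult.commute)
      then have "(x\<^sup>2) ^ M * exp (- a * x\<^sup>2) \<le> real M ^ M * exp (a * x\<^sup>2) / a ^ M * exp (- a * x\<^sup>2)"
        by (intro mult_right_mono) auto
      also have "\<dots> = real M ^ M / a ^ M" by (simp add: exp_minus)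
      finally show ?thesis .
    qed
    have "(1 + \<bar>x\<bar>) ^ M * exp (- a * x\<^sup>2) \<le> 2 ^ M * (1 + (x\<^sup>2) ^ M) * exp (- a * x\<^sup>2)"
      using poly by (intro mult_right_mono) auto
    also have "\<dots> = 2 ^ M * (exp (- a * x\<^sup>2) + (x\<^sup>2) ^ M * exp (- a * x\<^sup>2))"
      by (simp add: algebra_simps)
    also have "\<dots> \<le> 2 ^ M * (1 + real M ^ M / a ^ M)"
      using assms gauss by (intro mult_left_mono add_mono) auto
    finally show ?thesis .
  qed
  then show ?thesis by blast
qed

definition gaussian_type :: "(real \<Rightarrow> real) \<Rightarrow> bool" where
  "gaussian_type f \<longleftrightarrow> (\<exists>a g. 0 < a \<and> slowly_increasing g \<and> f = (\<lambda>x. exp (- a * x\<^sup>2) * g x))"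

lemma gaussian_typeI: "0 < a \<Longrightarrow> slowly_increasing g \<Longrightarrow> gaussian_type (\<lambda>x. exp (- a * x\<^sup>2) * g x)"
  unfolding gaussian_type_def by blast

lemma gaussian_type_slowly_increasing: "gaussian_type f \<Longrightarrow> slowly_increasing f"
  unfolding gaussian_type_def
  using slowly_increasing_mult[OF slowly_increasing_exp[of _ 0]] by fastforce

lemma gaussian_type_add:
  assumes "gaussian_type f" "gaussian_type g"
  shows "gaussian_type (\<lambda>x. f x + g x)"
proof -
  obtain a1 g1 a2 g2 where h: "0 < a1" "slowly_increasing g1" "f = (\<lambda>x. exp (- a1 * x\<^sup>2) * g1 x)"
    "0 < a2" "slowly_increasing g2" "g = (\<lambda>x. exp (- a2 * x\<^sup>2) * g2 x)"
    using assms unfolding gaussian_type_def by blast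
  define a where "a = min a1 a2 / 2"
  have a: "0 < a" "0 < a1 - a" "0 < a2 - a" using h by (auto simp: a_def)
  have split: "exp (- b * x\<^sup>2) = exp (- a * x\<^sup>2) * exp (- (b - a) * x\<^sup>2 + 0 * x)" for b x
    by (simp add: exp_add[symmetric] algebra_simps)
  have "(\<lambda>x. f x + g x) = (\<lambda>x. exp (- a * x\<^sup>2) *
      (exp (- (a1 - a) * x\<^sup>2 + 0 * x) * g1 x + exp (- (a2 - a) * x\<^sup>2 + 0 * x) * g2 x))"
    unfolding h(3,6) split[of a1] split[of a2] by (simp add: fun_eq_iff algebra_simps)
  moreover have "slowly_increasing (\<lambda>x. exp (- (a1 - a) * x\<^sup>2 + 0 * x) * g1 x +
      exp (- (a2 - a) * x\<^sup>2 + 0 * x) * g2 x)"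
    using a h by (intro slowly_increasing.intros) auto
  ultimately show ?thesis using a unfolding gaussian_type_def by blast
qed

lemma gaussian_type_mult:
  assumes "gaussian_type f" "slowly_increasing h"
  shows "gaussian_type (\<lambda>x. f x * h x)" "gaussian_type (\<lambda>x. h x * f x)"
proof -
  obtain a g where g: "0 < a" "slowly_increasing g" "f = (\<lambda>x. exp (- a * x\<^sup>2) * g x)"
    using assms unfolding gaussian_type_def by blast
  then have "gaussian_type (\<lambda>x. exp (- a * x\<^sup>2) * (g x * h x))"
    using assms(2) by (intro gaussian_typeI slowly_increasing_mult)
  then show "gaussian_type (\<lambda>x. f x * h x)" "gaussian_type (\<lambda>x. h x * f x)"
    unfolding g(3) by (simp_all add: ac_simps)
qed

lemma gaussian_type_cmult: "gaussian_type f \<Longrightarrow> gaussian_type (\<lambda>x. c * f x)"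
  using gaussian_type_mult(2)[OF _ slowly_increasing_const] .

lemma gaussian_type_mult_power: "gaussian_type f \<Longrightarrow> gaussian_type (\<lambda>x. x ^ k * f x)"
  using gaussian_type_mult(2)[OF _ slowly_increasing_power[OF slowly_increasing_ident]] .

lemma gaussian_type_sum:
  "finite S \<Longrightarrow> S \<noteq> {} \<Longrightarrow> (\<And>j. j \<in> S \<Longrightarrow> gaussian_type (f j)) \<Longrightarrow>
    gaussian_type (\<lambda>x. \<Sum>j\<in>S. f j x)"
  by (induction S rule: finite_ne_induct) (simp_all add: gaussian_type_add)

lemma gaussian_type_has_real_derivative:
  assumes "gaussian_type f"
  shows "\<exists>f'. gaussian_type f' \<and> (\<forall>x. (f has_real_derivative f' x) (at x))"
proof -
  obtain a g where g: "0 < a" "slowly_increasing g" "f = (\<lambda>x. exp (- a * x\<^sup>2) * g x)"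
    using assms unfolding gaussian_type_def by blast
  obtain g' where g': "slowly_increasing g'" "\<And>x. (g has_real_derivative g' x) (at x)"
    using slowly_increasing_has_real_derivative[OF g(2)] by blast
  let ?f' = "\<lambda>x. exp (- a * x\<^sup>2) * (g' x + (- 2 * a) * x * g x)"
  have "gaussian_type ?f'"
    using g g' by (intro gaussian_typeI slowly_increasing.intros)
  moreover have "(f has_real_derivative ?f' x) (at x)" for x
    unfolding g(3) using g'(2)[of x]
    by (auto intro!: derivative_eq_intros simp: power2_eq_square algebra_simps)
  ultimately show ?thesis by blast
qed

lemma gaussian_type_iterated_deriv: "gaussian_type f \<Longrightarrow> gaussian_type ((deriv ^^ n) f)"
proof (induction n)
  case (Suc n)
  then obtain f' where "gaussian_type f'" "\<And>x. ((deriv ^^ n) f has_real_derivative f' x) (at x)"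
    using gaussian_type_has_real_derivative by blast
  moreover have "deriv ((deriv ^^ n) f) = f'"
    using calculation(2) DERIV_imp_deriv by blast
  ultimately show ?case by simp
qed simp

lemma gaussian_type_differentiable: "gaussian_type f \<Longrightarrow> f differentiable (at x)"
  using gaussian_type_has_real_derivative real_differentiable_def by blast

lemma gaussian_type_has_real_derivative_iterated_deriv:
  "gaussian_type f \<Longrightarrow> ((deriv ^^ n) f has_real_derivative (deriv ^^ Suc n) f x) (at x)"
  using gaussian_type_differentiable[OF gaussian_type_iterated_deriv]
  by (simp add: DERIV_deriv_iff_real_differentiable)

lemma gaussian_type_rapidly_decreasing:
  assumes "gaussian_type f"
  shows "rapidly_decreasing f"
proof -
  obtain a g where g: "0 < a" "slowly_increasing g" "f = (\<lambda>x. exp (- a * x\<^sup>2) * g x)"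
    using assms unfolding gaussian_type_def by blast
  obtain C N where C: "\<And>x. \<bar>g x\<bar> \<le> C * (1 + \<bar>x\<bar>) ^ N"
    using slowly_increasing_polynomial_bound[OF g(2)] by blast
  have C0: "0 \<le> C" using C[of 0] abs_ge_zero[of "g 0"] by simp
  have "\<exists>D. \<forall>x. \<bar>x\<bar> ^ m * \<bar>f x\<bar> \<le> D" for m
  proof -
    obtain D where D: "\<And>x. (1 + \<bar>x\<bar>) ^ (m + N) * exp (- a * x\<^sup>2) \<le> D"
      using polynomial_mult_gaussian_bounded[OF g(1)] by blast
    have "\<bar>x\<bar> ^ m * \<bar>f x\<bar> \<le> C * D" for x
    proof -
      have "\<bar>x\<bar> ^ m * \<bar>f x\<bar> = exp (- a * x\<^sup>2) * (\<bar>x\<bar> ^ m * \<bar>g x\<bar>)"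
        unfolding g(3) by (simp add: abs_mult)
      also have "\<dots> \<le> exp (- a * x\<^sup>2) * ((1 + \<bar>x\<bar>) ^ m * (C * (1 + \<bar>x\<bar>) ^ N))"
        using C[of x] by (intro mult_left_mono mult_mono power_mono) auto
      also have "\<dots> = C * ((1 + \<bar>x\<bar>) ^ (m + N) * exp (- a * x\<^sup>2))"
        by (simp add: power_add algebra_simps)
      also have "\<dots> \<le> C * D" using D[of x] C0 by (intro mult_left_mono) auto
      finally show ?thesis .
    qed
    then show ?thesis by blast
  qed
  then show ?thesis
    unfolding rapidly_decreasing_def
    using slowly_increasing_continuous_on[OF gaussian_type_slowly_increasing[OF assms]] by blast
qed

lemma gaussian_type_schwartz:
  assumes "gaussian_type f"
  shows "schwartz f"
  using gaussian_type_differentiable[OF gaussian_type_iterated_deriv[OF assms]]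
    rapidly_decreasingD(2)[OF gaussian_type_rapidly_decreasing[OF gaussian_type_iterated_deriv[OF assms]]]
  unfolding schwartz_def by blast

lemma schwartz_iterated_deriv_rapidly_decreasing:
  assumes "schwartz f"
  shows "rapidly_decreasing ((deriv ^^ n) f)"
  using assms unfolding schwartz_def rapidly_decreasing_def
  by (meson continuous_at_imp_continuous_on differentiable_imp_continuous_within)

lemma schwartz_rapidly_decreasing: "schwartz f \<Longrightarrow> rapidly_decreasing f"
  using schwartz_iterated_deriv_rapidly_decreasing[of f 0] by simp

lemma schwartz_iterated_deriv_bounded: "schwartz f \<Longrightarrow> \<exists>B. \<forall>x. \<bar>(deriv ^^ n) f x\<bar> \<le> B"
  unfolding schwartz_def by (metis mult_1 power_0)

lemma schwartz_has_real_derivative_iterated_deriv: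
  "schwartz f \<Longrightarrow> ((deriv ^^ n) f has_real_derivative (deriv ^^ Suc n) f x) (at x)"
  unfolding schwartz_def by (simp add: DERIV_deriv_iff_real_differentiable)

section \<open>The pairing of a shock wave with a test function\<close>

text \<open>After the substitution \<open>x = a t + \<epsilon> y\<close>, the integrand \<open>(w\<^sub>t + w w\<^sub>x) \<psi>\<close> of the pairing
  becomes \<open>hopf_density \<theta> h0 dh a y \<psi> (a t + \<epsilon> y) / \<epsilon>\<close>.\<close>

definition hopf_density :: "(real \<Rightarrow> real) \<Rightarrow> real \<Rightarrow> real \<Rightarrow> real \<Rightarrow> real \<Rightarrow> real" where
  "hopf_density \<theta> h0 dh a y = dh * \<theta> y * (h0 - a + dh * Kfun \<theta> y)"

lemma hopf_density_eq:
  "hopf_density \<theta> h0 dh a y = dh * (h0 - a) * \<theta> y + dh\<^sup>2 * (\<theta> y * Kfun \<theta> y)"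
  by (simp add: hopf_density_def algebra_simps power2_eq_square)

lemma rapidly_decreasing_hopf_density:
  assumes "rapidly_decreasing \<theta>"
  shows "rapidly_decreasing (\<lambda>y. y ^ k * hopf_density \<theta> h0 dh a y)"
  unfolding hopf_density_eq using assms
  by (intro rapidly_decreasing_mult_power rapidly_decreasing_add rapidly_decreasing_cmult
      rapidly_decreasing_mult_Kfun)

lemma hopf_density_moment:
  assumes "rapidly_decreasing \<theta>"
  shows "integral UNIV (\<lambda>y. y ^ k * hopf_density \<theta> h0 dh a y) =
     dh * (h0 - a) * integral UNIV (\<lambda>y. y ^ k * \<theta> y) +
     dh\<^sup>2 * integral UNIV (\<lambda>y. y ^ k * \<theta> y * Kfun \<theta> y)"
proof -
  have "(\<lambda>y. dh * (h0 - a) * (y ^ k * \<theta> y)) integrable_on UNIV"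
    "(\<lambda>y. dh\<^sup>2 * (y ^ k * (\<theta> y * Kfun \<theta> y))) integrable_on UNIV"
    using assms by (auto intro!: integrable_on_mult_right rapidly_decreasing_integrable_on
        rapidly_decreasing_mult_power rapidly_decreasing_mult_Kfun)
  moreover have "(\<lambda>y. y ^ k * hopf_density \<theta> h0 dh a y) =
      (\<lambda>y. dh * (h0 - a) * (y ^ k * \<theta> y) + dh\<^sup>2 * (y ^ k * (\<theta> y * Kfun \<theta> y)))"
    by (simp add: hopf_density_eq fun_eq_iff algebra_simps)
  ultimately show ?thesis
    by (simp add: integral_add integral_mult_right mult.assoc)
qed

lemma deriv_shock_wave_time:
  assumes "rapidly_decreasing \<theta>" "0 < \<epsilon>"
  shows "deriv (\<lambda>s. shock_wave \<theta> h0 dh a s x \<epsilon>) t = - dh * a / \<epsilon> * \<theta> ((x - a * t) / \<epsilon>)"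
proof (rule DERIV_imp_deriv)
  show "((\<lambda>s. shock_wave \<theta> h0 dh a s x \<epsilon>) has_real_derivative - dh * a / \<epsilon> * \<theta> ((x - a * t) / \<epsilon>)) (at t)"
    unfolding shock_wave_def using assms
    by (auto intro!: derivative_eq_intros DERIV_chain2[OF Kfun_has_real_derivative])
qed

lemma deriv_shock_wave_space:
  assumes "rapidly_decreasing \<theta>" "0 < \<epsilon>"
  shows "deriv (\<lambda>y. shock_wave \<theta> h0 dh a t y \<epsilon>) x = dh / \<epsilon> * \<theta> ((x - a * t) / \<epsilon>)"
proof (rule DERIV_imp_deriv)
  show "((\<lambda>y. shock_wave \<theta> h0 dh a t y \<epsilon>) has_real_derivative dh / \<epsilon> * \<theta> ((x - a * t) / \<epsilon>)) (at x)"
    unfolding shock_wave_def using assms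
    by (auto intro!: derivative_eq_intros DERIV_chain2[OF Kfun_has_real_derivative])
qed

lemma rapidly_decreasing_mult_schwartz_affine:
  assumes "rapidly_decreasing f" "schwartz \<psi>"
  shows "rapidly_decreasing (\<lambda>y. f y * \<psi> (c + \<epsilon> * y))"
proof -
  obtain B where "\<And>x. \<bar>(deriv ^^ 0) \<psi> x\<bar> \<le> B"
    using schwartz_iterated_deriv_bounded[OF assms(2)] by blast
  moreover have "continuous_on UNIV (\<lambda>y. \<psi> (c + \<epsilon> * y))"
    by (rule continuous_on_compose2[OF rapidly_decreasingD(1)[OF schwartz_rapidly_decreasing[OF assms(2)]]])
      (auto intro: continuous_intros)
  ultimately show ?thesis
    by (intro rapidly_decreasing_mult_bounded(2)[OF assms(1)]) auto
qed

lemma hopf_pairing_shock_wave: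
  assumes \<theta>: "rapidly_decreasing \<theta>" and \<psi>: "schwartz \<psi>" and \<epsilon>: "0 < \<epsilon>"
  shows "hopf_pairing (shock_wave \<theta> h0 dh a) \<psi> t \<epsilon> =
         integral UNIV (\<lambda>y. hopf_density \<theta> h0 dh a y * \<psi> (a * t + \<epsilon> * y))"
proof -
  define H where "H x = hopf_density \<theta> h0 dh a ((x - a * t) / \<epsilon>) * \<psi> x / \<epsilon>" for x
  define G where "G y = hopf_density \<theta> h0 dh a y * \<psi> (a * t + \<epsilon> * y)" for y
  have integrand: "(deriv (\<lambda>s. shock_wave \<theta> h0 dh a s x \<epsilon>) t +
      shock_wave \<theta> h0 dh a t x \<epsilon> * deriv (\<lambda>y. shock_wave \<theta> h0 dh a t y \<epsilon>) x) * \<psi> x = H x" for x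
    unfolding deriv_shock_wave_time[OF \<theta> \<epsilon>] deriv_shock_wave_space[OF \<theta> \<epsilon>] H_def
    unfolding shock_wave_def hopf_density_def using \<epsilon> by (simp add: field_simps)
  have H_affine: "H (a * t + \<epsilon> * y) = G y / \<epsilon>" for y
    unfolding H_def G_def using \<epsilon> by simp
  have "rapidly_decreasing G"
    unfolding G_def using rapidly_decreasing_hopf_density[OF \<theta>, of 0]
    by (intro rapidly_decreasing_mult_schwartz_affine \<psi>) simp
  then have G: "integrable lborel G" by (rule rapidly_decreasing_integrable)
  then have H: "integrable lborel H"
    using lborel_integrable_real_affine_iff[of \<epsilon> H "a * t"] \<epsilon> by (simp add: H_affine)
  have "integral UNIV H = (\<integral>x. H x \<partial>lborel)" by (rule integral_lborel[OF H])
  also have "\<dots> = \<epsilon> * (\<integral>y. H (a * t + \<epsilon> * y) \<partial>lborel)"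
    using lborel_integral_real_affine[of \<epsilon> H "a * t"] \<epsilon> by simp
  also have "\<dots> = (\<integral>y. G y \<partial>lborel)" unfolding H_affine using \<epsilon> by simp
  also have "\<dots> = integral UNIV G" by (rule integral_lborel[OF G, symmetric])
  finally show ?thesis
    unfolding hopf_pairing_def integrand G_def .
qed

lemma schwartz_taylor_remainder_bound:
  assumes "schwartz \<psi>"
  shows "\<exists>B. \<forall>c h. \<bar>\<psi> (c + h) - (\<Sum>k<N. (deriv ^^ k) \<psi> c / fact k * h ^ k)\<bar> \<le> B * \<bar>h\<bar> ^ N"
proof -
  obtain B where B: "\<And>x. \<bar>(deriv ^^ N) \<psi> x\<bar> \<le> B"
    using schwartz_iterated_deriv_bounded[OF assms] by blast
  have "\<bar>\<psi> (c + h) - (\<Sum>k<N. (deriv ^^ k) \<psi> c / fact k * h ^ k)\<bar> \<le> B / fact N * \<bar>h\<bar> ^ N" for c h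
  proof (cases "N = 0 \<or> h = 0")
    case True
    then show ?thesis using B[of "c + h"] by (auto simp: lessThan_Suc_eq_insert_0 zero_power)
  next
    case False
    have "\<exists>t. (if c + h < c then c + h < t \<and> t < c else c < t \<and> t < c + h) \<and>
        \<psi> (c + h) = (\<Sum>m<N. (deriv ^^ m) \<psi> c / fact m * (c + h - c) ^ m) +
          (deriv ^^ N) \<psi> t / fact N * (c + h - c) ^ N"
    proof (rule Taylor[where a = "min c (c + h)" and b = "max c (c + h)"])
      show "\<forall>m t. m < N \<and> min c (c + h) \<le> t \<and> t \<le> max c (c + h) \<longrightarrow>
          ((deriv ^^ m) \<psi> has_real_derivative (deriv ^^ Suc m) \<psi> t) (at t)"
        using schwartz_has_real_derivative_iterated_deriv[OF assms] by blast
    qed (use False in auto)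
    then obtain t where "\<psi> (c + h) = (\<Sum>m<N. (deriv ^^ m) \<psi> c / fact m * h ^ m) +
        (deriv ^^ N) \<psi> t / fact N * h ^ N"
      by auto
    then have "\<bar>\<psi> (c + h) - (\<Sum>k<N. (deriv ^^ k) \<psi> c / fact k * h ^ k)\<bar> =
        \<bar>(deriv ^^ N) \<psi> t\<bar> / fact N * \<bar>h\<bar> ^ N"
      by (simp add: abs_mult power_abs)
    also have "\<dots> \<le> B / fact N * \<bar>h\<bar> ^ N"
      using B[of t] by (intro mult_right_mono divide_right_mono) auto
    finally show ?thesis .
  qed
  then show ?thesis by blast
qed

lemma has_integral_mult_polynomial:
  assumes "\<And>k. rapidly_decreasing (\<lambda>y. y ^ k * F y)"
  shows "((\<lambda>y. F y * (\<Sum>k<N. c k * (\<epsilon> * y) ^ k)) has_integral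
      (\<Sum>k<N. c k * integral UNIV (\<lambda>y. y ^ k * F y) * \<epsilon> ^ k)) UNIV"
proof -
  have "((\<lambda>y. \<Sum>k<N. (c k * \<epsilon> ^ k) * (y ^ k * F y)) has_integral
      (\<Sum>k<N. (c k * \<epsilon> ^ k) * integral UNIV (\<lambda>y. y ^ k * F y))) UNIV"
    by (intro has_integral_sum has_integral_mult_right rapidly_decreasing_has_integral assms) simp
  then show ?thesis
    by (simp add: sum_distrib_left power_mult_distrib mult_ac)
qed

lemma hopf_pairing_taylor_remainder:
  assumes \<theta>: "rapidly_decreasing \<theta>" and \<psi>: "schwartz \<psi>" and \<epsilon>: "0 < \<epsilon>"
    and B: "\<And>c h. \<bar>\<psi> (c + h) - (\<Sum>k<N. (deriv ^^ k) \<psi> c / fact k * h ^ k)\<bar> \<le> B * \<bar>h\<bar> ^ N"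
  shows "\<bar>hopf_pairing (shock_wave \<theta> h0 dh a) \<psi> t \<epsilon> -
      (\<Sum>k<N. (deriv ^^ k) \<psi> (a * t) / fact k * integral UNIV (\<lambda>y. y ^ k * hopf_density \<theta> h0 dh a y) * \<epsilon> ^ k)\<bar>
    \<le> B * integral UNIV (\<lambda>y. \<bar>y ^ N * hopf_density \<theta> h0 dh a y\<bar>) * \<epsilon> ^ N"
    (is "\<bar>?I - ?S\<bar> \<le> B * ?M * \<epsilon> ^ N")
proof -
  let ?D = "hopf_density \<theta> h0 dh a"
  define p where "p y = (\<Sum>k<N. (deriv ^^ k) \<psi> (a * t) / fact k * (\<epsilon> * y) ^ k)" for y
  have D: "\<And>k. rapidly_decreasing (\<lambda>y. y ^ k * ?D y)"
    using rapidly_decreasing_hopf_density[OF \<theta>] .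
  have "((\<lambda>y. ?D y * \<psi> (a * t + \<epsilon> * y)) has_integral ?I) UNIV"
    unfolding hopf_pairing_shock_wave[OF \<theta> \<psi> \<epsilon>] using D[of 0]
    by (intro rapidly_decreasing_has_integral rapidly_decreasing_mult_schwartz_affine \<psi>) simp
  from has_integral_diff[OF this has_integral_mult_polynomial[OF D]]
  have remainder: "((\<lambda>y. ?D y * (\<psi> (a * t + \<epsilon> * y) - p y)) has_integral ?I - ?S) UNIV"
    unfolding p_def right_diff_distrib .
  have majorant: "((\<lambda>y. B * \<epsilon> ^ N * \<bar>y ^ N * ?D y\<bar>) has_integral B * \<epsilon> ^ N * ?M) UNIV"
    by (intro has_integral_mult_right rapidly_decreasing_has_integral rapidly_decreasing_abs D)
  have "norm (?D y * (\<psi> (a * t + \<epsilon> * y) - p y)) \<le> B * \<epsilon> ^ N * \<bar>y ^ N * ?D y\<bar>" for y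
  proof -
    have "norm (?D y * (\<psi> (a * t + \<epsilon> * y) - p y)) \<le> \<bar>?D y\<bar> * (B * \<bar>\<epsilon> * y\<bar> ^ N)"
      unfolding real_norm_def abs_mult p_def using B[of "a * t" "\<epsilon> * y"]
      by (intro mult_left_mono) (auto simp: abs_mult)
    also have "\<dots> = B * \<epsilon> ^ N * \<bar>y ^ N * ?D y\<bar>"
      using \<epsilon> by (simp add: abs_mult power_abs power_mult_distrib)
    finally show ?thesis .
  qed
  then have "norm (?I - ?S) \<le> B * \<epsilon> ^ N * ?M"
    using has_integral_norm_bound_integral_component[where k = "1::real", OF remainder majorant] by simp
  then show ?thesis by (simp add: mult_ac)
qed

lemma has_asymp_expansion_hopf_pairing:
  assumes \<theta>: "rapidly_decreasing \<theta>" and \<psi>: "schwartz \<psi>"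
  shows "has_asymp_expansion (hopf_pairing (shock_wave \<theta> h0 dh a) \<psi> t)
      (\<lambda>k. (deriv ^^ k) \<psi> (a * t) / fact k * integral UNIV (\<lambda>y. y ^ k * hopf_density \<theta> h0 dh a y))"
  unfolding has_asymp_expansion_def
proof
  fix N
  obtain B where B: "\<And>c h. \<bar>\<psi> (c + h) - (\<Sum>k<N. (deriv ^^ k) \<psi> c / fact k * h ^ k)\<bar> \<le> B * \<bar>h\<bar> ^ N"
    using schwartz_taylor_remainder_bound[OF \<psi>] by blast
  let ?M = "integral UNIV (\<lambda>y. \<bar>y ^ N * hopf_density \<theta> h0 dh a y\<bar>)"
  have "eventually (\<lambda>\<epsilon>::real. 0 < \<epsilon>) (at_right 0)"
    by (simp add: eventually_at_right_less)
  then show "(\<lambda>\<epsilon>. hopf_pairing (shock_wave \<theta> h0 dh a) \<psi> t \<epsilon> - (\<Sum>k<N. (deriv ^^ k) \<psi> (a * t) / fact k *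
      integral UNIV (\<lambda>y. y ^ k * hopf_density \<theta> h0 dh a y) * \<epsilon> ^ k)) \<in> O[at_right 0](\<lambda>\<epsilon>. \<epsilon> ^ N)"
  proof (intro bigoI[where c = "B * ?M"], eventually_elim)
    case (elim \<epsilon>)
    then have "\<bar>\<epsilon> ^ N\<bar> = \<epsilon> ^ N" by simp
    with hopf_pairing_taylor_remainder[OF \<theta> \<psi> \<open>0 < \<epsilon>\<close> B] show ?case
      by (simp only: real_norm_def)
  qed
qed

lemma tendsto_integral_mult_exp_scaled:
  assumes g: "rapidly_decreasing g"
  shows "((\<lambda>\<epsilon>. integral UNIV (\<lambda>y. g y * exp (- (\<epsilon> * y)\<^sup>2))) \<longlongrightarrow> integral UNIV g) (at_right 0)"
proof -
  let ?M = "integral UNIV (\<lambda>y. \<bar>y\<^sup>2 * g y\<bar>)"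
  have bound: "norm (integral UNIV (\<lambda>y. g y * exp (- (\<epsilon> * y)\<^sup>2)) - integral UNIV g) \<le> ?M * \<epsilon>\<^sup>2" for \<epsilon>
  proof -
    have "((\<lambda>y. g y * exp (- (\<epsilon> * y)\<^sup>2)) has_integral integral UNIV (\<lambda>y. g y * exp (- (\<epsilon> * y)\<^sup>2))) UNIV"
      by (intro rapidly_decreasing_has_integral rapidly_decreasing_mult_bounded(2)[OF g, of _ 1]
          continuous_on_exp continuous_on_minus continuous_on_power continuous_on_mult
          continuous_on_const continuous_on_id) simp
    from has_integral_diff[OF this rapidly_decreasing_has_integral[OF g]]
    have difference: "((\<lambda>y. g y * (exp (- (\<epsilon> * y)\<^sup>2) - 1)) has_integral
        integral UNIV (\<lambda>y. g y * exp (- (\<epsilon> * y)\<^sup>2)) - integral UNIV g) UNIV"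
      by (simp add: right_diff_distrib)
    have majorant: "((\<lambda>y. \<epsilon>\<^sup>2 * \<bar>y\<^sup>2 * g y\<bar>) has_integral \<epsilon>\<^sup>2 * ?M) UNIV"
      by (intro has_integral_mult_right rapidly_decreasing_has_integral rapidly_decreasing_abs
          rapidly_decreasing_mult_power g)
    have "norm (g y * (exp (- (\<epsilon> * y)\<^sup>2) - 1)) \<le> \<epsilon>\<^sup>2 * \<bar>y\<^sup>2 * g y\<bar>" for y
    proof -
      have "1 - (\<epsilon> * y)\<^sup>2 \<le> exp (- (\<epsilon> * y)\<^sup>2)" "exp (- (\<epsilon> * y)\<^sup>2) \<le> 1"
        using exp_ge_add_one_self[of "- (\<epsilon> * y)\<^sup>2"] by simp_all
      then have "\<bar>exp (- (\<epsilon> * y)\<^sup>2) - 1\<bar> \<le> (\<epsilon> * y)\<^sup>2" by linarith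
      then have "\<bar>g y\<bar> * \<bar>exp (- (\<epsilon> * y)\<^sup>2) - 1\<bar> \<le> \<bar>g y\<bar> * (\<epsilon> * y)\<^sup>2"
        by (intro mult_left_mono) auto
      then show ?thesis by (simp add: abs_mult power_mult_distrib mult_ac)
    qed
    then show ?thesis
      using has_integral_norm_bound_integral_component[where k = "1::real", OF difference majorant]
      by (simp add: mult.commute)
  qed
  have "((\<lambda>\<epsilon>. ?M * \<epsilon>\<^sup>2) \<longlongrightarrow> ?M * 0\<^sup>2) (at_right (0::real))"
    by (intro tendsto_mult_left tendsto_power tendsto_ident_at)
  then have "((\<lambda>\<epsilon>. ?M * \<epsilon>\<^sup>2) \<longlongrightarrow> 0) (at_right (0::real))" by simp
  with always_eventually[OF allI[OF bound]]
  have "((\<lambda>\<epsilon>. integral UNIV (\<lambda>y. g y * exp (- (\<epsilon> * y)\<^sup>2)) - integral UNIV g) \<longlongrightarrow> 0)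
      (at_right 0)"
    by (rule Lim_null_comparison)
  then show ?thesis by (simp add: LIM_zero_iff)
qed

lemma tendsto_eq_0_if_power_mult_bigo:
  fixes I J :: "real \<Rightarrow> real"
  assumes IJ: "\<And>\<epsilon>. 0 < \<epsilon> \<Longrightarrow> I \<epsilon> = \<epsilon> ^ k * J \<epsilon>"
    and I: "I \<in> O[at_right 0](\<lambda>\<epsilon>. \<epsilon> ^ Suc k)" and J: "(J \<longlongrightarrow> L) (at_right 0)"
  shows "L = 0"
proof -
  obtain C where "eventually (\<lambda>\<epsilon>. norm (I \<epsilon>) \<le> C * norm (\<epsilon> ^ Suc k)) (at_right 0)"
    using I by (elim landau_o.bigE) blast
  moreover have "eventually (\<lambda>\<epsilon>::real. 0 < \<epsilon>) (at_right 0)"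
    by (simp add: eventually_at_right_less)
  ultimately have "eventually (\<lambda>\<epsilon>. norm (J \<epsilon>) \<le> C * \<epsilon>) (at_right 0)"
  proof eventually_elim
    case (elim \<epsilon>)
    then have "\<epsilon> ^ k * \<bar>J \<epsilon>\<bar> \<le> \<epsilon> ^ k * (C * \<epsilon>)"
      using IJ[of \<epsilon>] by (simp add: abs_mult mult_ac)
    then show ?case using elim(2) by simp
  qed
  moreover have "((\<lambda>\<epsilon>. C * \<epsilon>) \<longlongrightarrow> C * 0) (at_right (0::real))"
    by (intro tendsto_mult_left tendsto_ident_at)
  ultimately have "(J \<longlongrightarrow> 0) (at_right 0)" by (simp add: Lim_null_comparison)
  then show "L = 0" using tendsto_unique[OF _ J] by simp
qed

lemma hopf_solution_upto_moment_eq_0: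
  assumes \<theta>: "rapidly_decreasing \<theta>" and "0 \<le> T"
    and sol: "hopf_solution_upto (shock_wave \<theta> h0 dh a) T l" and "k < l"
  shows "integral UNIV (\<lambda>y. y ^ k * hopf_density \<theta> h0 dh a y) = 0"
proof -
  let ?D = "\<lambda>y. y ^ k * hopf_density \<theta> h0 dh a y"
  define \<psi> :: "real \<Rightarrow> real" where "\<psi> x = exp (- x\<^sup>2) * x ^ k" for x
  have \<psi>: "schwartz \<psi>"
    unfolding \<psi>_def[abs_def] using gaussian_typeI[of 1 "\<lambda>x. x ^ k"]
    by (simp add: gaussian_type_schwartz slowly_increasing_power slowly_increasing_ident)
  define I where "I = hopf_pairing (shock_wave \<theta> h0 dh a) \<psi> 0"
  obtain \<xi> where expansion: "has_asymp_expansion I \<xi>" and vanish: "\<forall>j<l. \<xi> j = 0"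
    using sol \<psi> \<open>0 \<le> T\<close> unfolding hopf_solution_upto_def I_def by fastforce
  have "I \<epsilon> = \<epsilon> ^ k * integral UNIV (\<lambda>y. ?D y * exp (- (\<epsilon> * y)\<^sup>2))" if "0 < \<epsilon>" for \<epsilon>
  proof -
    have "I \<epsilon> = integral UNIV (\<lambda>y. hopf_density \<theta> h0 dh a y * \<psi> (a * 0 + \<epsilon> * y))"
      unfolding I_def by (rule hopf_pairing_shock_wave[OF \<theta> \<psi> that])
    also have "\<dots> = integral UNIV (\<lambda>y. \<epsilon> ^ k * (?D y * exp (- (\<epsilon> * y)\<^sup>2)))"
      unfolding \<psi>_def by (simp add: power_mult_distrib mult_ac)
    finally show ?thesis by (simp add: integral_mult_right)
  qed
  moreover have "I \<in> O[at_right 0](\<lambda>\<epsilon>. \<epsilon> ^ Suc k)"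
  proof -
    have "(\<Sum>j<Suc k. \<xi> j * \<epsilon> ^ j) = 0" for \<epsilon> :: real
      using vanish \<open>k < l\<close> by simp
    then show ?thesis
      using expansion[unfolded has_asymp_expansion_def, THEN spec[of _ "Suc k"]] by simp
  qed
  moreover have "((\<lambda>\<epsilon>. integral UNIV (\<lambda>y. ?D y * exp (- (\<epsilon> * y)\<^sup>2))) \<longlongrightarrow> integral UNIV ?D) (at_right 0)"
    by (rule tendsto_integral_mult_exp_scaled[OF rapidly_decreasing_hopf_density[OF \<theta>]])
  ultimately show ?thesis by (rule tendsto_eq_0_if_power_mult_bigo)
qed

lemma integral_mult_Kfun:
  assumes "rapidly_decreasing \<theta>"
  shows "integral UNIV (\<lambda>x. \<theta> x * Kfun \<theta> x) = (integral UNIV \<theta>)\<^sup>2 / 2"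
proof -
  have "((\<lambda>x. \<theta> x * Kfun \<theta> x) has_integral ((integral UNIV \<theta>)\<^sup>2 / 2 - 0\<^sup>2 / 2)) UNIV"
  proof (rule rapidly_decreasing_has_integral_FTC[where F = "\<lambda>x. (Kfun \<theta> x)\<^sup>2 / 2"])
    show "((\<lambda>x. (Kfun \<theta> x)\<^sup>2 / 2) has_real_derivative \<theta> x * Kfun \<theta> x) (at x)" for x
      using Kfun_has_real_derivative[OF assms, of x] by (auto intro!: derivative_eq_intros)
    show "((\<lambda>x. (Kfun \<theta> x)\<^sup>2 / 2) \<longlongrightarrow> 0\<^sup>2 / 2) at_bot"
      using Kfun_tendsto_at_bot[OF assms] by (intro tendsto_intros) simp_all
    show "((\<lambda>x. (Kfun \<theta> x)\<^sup>2 / 2) \<longlongrightarrow> (integral UNIV \<theta>)\<^sup>2 / 2) at_top"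
      using Kfun_tendsto_at_top[OF assms] by (intro tendsto_intros) simp_all
  qed (rule rapidly_decreasing_mult_Kfun[OF assms])
  then show ?thesis by (simp add: integral_unique)
qed

lemma shock_wave_rankine_hugoniot:
  assumes \<theta>: "rapidly_decreasing \<theta>" "(\<theta> has_integral 1) UNIV" and "dh \<noteq> 0" "0 \<le> T"
    and "hopf_solution_upto (shock_wave \<theta> h0 dh a) T l" "1 \<le> l"
  shows "(a - h0) / dh = 1/2"
proof -
  have "integral UNIV \<theta> = 1" using \<theta>(2) by (rule integral_unique)
  moreover have "integral UNIV (\<lambda>y. y ^ 0 * hopf_density \<theta> h0 dh a y) = 0"
    using hopf_solution_upto_moment_eq_0[OF \<theta>(1) assms(4,5), of 0] assms(6) by simp
  ultimately have "dh * (h0 - a) + dh\<^sup>2 / 2 = 0"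
    using hopf_density_moment[OF \<theta>(1), of 0 h0 dh a] integral_mult_Kfun[OF \<theta>(1)] by simp
  then have "dh * (h0 - a + dh / 2) = 0" by (simp add: algebra_simps power2_eq_square)
  then have "h0 - a + dh / 2 = 0" using \<open>dh \<noteq> 0\<close> by simp
  then show ?thesis using \<open>dh \<noteq> 0\<close> by (simp add: field_simps)
qed

lemma shock_wave_hopf_solution_upto_iff:
  assumes \<theta>: "rapidly_decreasing \<theta>" and T: "0 \<le> T"
  shows "(\<forall>h0 dh. dh \<noteq> 0 \<longrightarrow> hopf_solution_upto (shock_wave \<theta> h0 dh (h0 + dh / 2)) T l) \<longleftrightarrow>
    (\<forall>k<l. (1/2) * integral UNIV (\<lambda>x. x ^ k * \<theta> x) = integral UNIV (\<lambda>x. x ^ k * \<theta> x * Kfun \<theta> x))"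
proof -
  have moment: "integral UNIV (\<lambda>y. y ^ k * hopf_density \<theta> h0 dh (h0 + dh / 2) y) =
      dh\<^sup>2 * (integral UNIV (\<lambda>x. x ^ k * \<theta> x * Kfun \<theta> x) - (1/2) * integral UNIV (\<lambda>x. x ^ k * \<theta> x))"
    for k h0 dh
    using hopf_density_moment[OF \<theta>, of k h0 dh "h0 + dh / 2"] by (simp add: algebra_simps power2_eq_square)
  show ?thesis
  proof
    assume "\<forall>h0 dh. dh \<noteq> 0 \<longrightarrow> hopf_solution_upto (shock_wave \<theta> h0 dh (h0 + dh / 2)) T l"
    from this[THEN spec[of _ 0], THEN spec[of _ 1]]
    have sol: "hopf_solution_upto (shock_wave \<theta> 0 1 (0 + 1 / 2)) T l" by simp
    show "\<forall>k<l. (1/2) * integral UNIV (\<lambda>x. x ^ k * \<theta> x) = integral UNIV (\<lambda>x. x ^ k * \<theta> x * Kfun \<theta> x)"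
    proof (intro allI impI)
      fix k assume "k < l"
      from hopf_solution_upto_moment_eq_0[OF \<theta> T sol this] moment[of k 0 1]
      show "(1/2) * integral UNIV (\<lambda>x. x ^ k * \<theta> x) = integral UNIV (\<lambda>x. x ^ k * \<theta> x * Kfun \<theta> x)"
        by simp
    qed
  next
    assume conditions: "\<forall>k<l. (1/2) * integral UNIV (\<lambda>x. x ^ k * \<theta> x) =
      integral UNIV (\<lambda>x. x ^ k * \<theta> x * Kfun \<theta> x)"
    show "\<forall>h0 dh. dh \<noteq> 0 \<longrightarrow> hopf_solution_upto (shock_wave \<theta> h0 dh (h0 + dh / 2)) T l"
      unfolding hopf_solution_upto_def
    proof (intro allI impI ballI exI conjI)
      fix h0 dh t :: real and \<psi> assume "schwartz \<psi>"
      show "has_asymp_expansion (hopf_pairing (shock_wave \<theta> h0 dh (h0 + dh / 2)) \<psi> t)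
          (\<lambda>k. (deriv ^^ k) \<psi> ((h0 + dh / 2) * t) / fact k *
            integral UNIV (\<lambda>y. y ^ k * hopf_density \<theta> h0 dh (h0 + dh / 2) y))"
        by (rule has_asymp_expansion_hopf_pairing[OF \<theta> \<open>schwartz \<psi>\<close>])
      fix k assume "k < l"
      then show "(deriv ^^ k) \<psi> ((h0 + dh / 2) * t) / fact k *
          integral UNIV (\<lambda>y. y ^ k * hopf_density \<theta> h0 dh (h0 + dh / 2) y) = 0"
        using conditions by (simp add: moment)
    qed
  qed
qed

section \<open>Moments of derivatives of the Gaussian\<close>

definition gaussian :: "real \<Rightarrow> real" where
  "gaussian x = exp (- x\<^sup>2)"

lemma gaussian_type_gaussian: "gaussian_type gaussian"
  using gaussian_typeI[of 1 "\<lambda>x. 1", OF _ slowly_increasing_const]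
  by (simp add: gaussian_def[abs_def])

lemma integral_power_mult_iterated_deriv_Suc:
  assumes f: "gaussian_type f"
  shows "integral UNIV (\<lambda>y. y ^ m * (deriv ^^ Suc q) f y) =
    - real m * integral UNIV (\<lambda>y. y ^ (m - 1) * (deriv ^^ q) f y)"
proof -
  let ?D = "\<lambda>q. (deriv ^^ q) f"
  have D: "\<And>q k. rapidly_decreasing (\<lambda>y. y ^ k * ?D q y)"
    by (intro gaussian_type_rapidly_decreasing gaussian_type_mult_power gaussian_type_iterated_deriv f)
  have FTC: "((\<lambda>y. real m * (y ^ (m - 1) * ?D q y) + y ^ m * ?D (Suc q) y) has_integral (0 - 0)) UNIV"
  proof (rule rapidly_decreasing_has_integral_FTC[where F = "\<lambda>y. y ^ m * ?D q y"])
    show "rapidly_decreasing (\<lambda>y. real m * (y ^ (m - 1) * ?D q y) + y ^ m * ?D (Suc q) y)"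
      by (intro rapidly_decreasing_add rapidly_decreasing_cmult D)
    show "((\<lambda>y. y ^ m * ?D q y) has_real_derivative
        real m * (x ^ (m - 1) * ?D q x) + x ^ m * ?D (Suc q) x) (at x)" for x
      using DERIV_mult[OF DERIV_pow[of m x] gaussian_type_has_real_derivative_iterated_deriv[OF f, of q x]]
      by (simp add: algebra_simps)
    show "((\<lambda>y. y ^ m * ?D q y) \<longlongrightarrow> 0) at_bot" "((\<lambda>y. y ^ m * ?D q y) \<longlongrightarrow> 0) at_top"
      using rapidly_decreasing_tendsto_0[OF D] by auto
  qed
  have "(\<lambda>y. real m * (y ^ (m - 1) * ?D q y)) integrable_on UNIV"
    "(\<lambda>y. y ^ m * ?D (Suc q) y) integrable_on UNIV"
    by (intro rapidly_decreasing_integrable_on rapidly_decreasing_cmult D; simp)+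
  then have "real m * integral UNIV (\<lambda>y. y ^ (m - 1) * ?D q y) +
      integral UNIV (\<lambda>y. y ^ m * ?D (Suc q) y) = 0"
    using integral_unique[OF FTC] by (simp only: integral_add integral_mult_right diff_self)
  then show ?thesis by linarith
qed

lemma integral_power_mult_iterated_deriv_eq_0:
  assumes "gaussian_type f" "m < p"
  shows "integral UNIV (\<lambda>y. y ^ m * (deriv ^^ p) f y) = 0"
  using assms(2)
proof (induction m arbitrary: p)
  case 0
  then obtain q where "p = Suc q" by (cases p) auto
  then show ?case using integral_power_mult_iterated_deriv_Suc[OF assms(1), of 0 q] by simp
next
  case (Suc m)
  then obtain q where q: "p = Suc q" "m < q" by (cases p) auto
  then show ?case using integral_power_mult_iterated_deriv_Suc[OF assms(1), of "Suc m" q] Suc.IH by simp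
qed

lemma integral_power_mult_iterated_deriv_same:
  assumes "gaussian_type f"
  shows "integral UNIV (\<lambda>y. y ^ m * (deriv ^^ m) f y) = (- 1) ^ m * fact m * integral UNIV f"
proof (induction m)
  case (Suc m)
  then show ?case
    using integral_power_mult_iterated_deriv_Suc[OF assms, of "Suc m" m] by (simp add: algebra_simps)
qed simp

lemma integral_gaussian_pos: "0 < integral UNIV gaussian"
proof -
  have g: "rapidly_decreasing gaussian"
    by (rule gaussian_type_rapidly_decreasing[OF gaussian_type_gaussian])
  have "integral {-1..1} (\<lambda>y::real. exp (- 1)) \<le> integral {-1..1} gaussian"
  proof (rule integral_le)
    show "(\<lambda>y::real. exp (- 1)) integrable_on {-1..1}"
      by (rule integrable_continuous_interval) (rule continuous_on_const)
    show "gaussian integrable_on {-1..1}" by (rule rapidly_decreasing_integrable_on[OF g]) simp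
    show "exp (- 1) \<le> gaussian y" if "y \<in> {-1..1}" for y
      using that by (simp add: gaussian_def abs_square_le_1 abs_le_iff)
  qed
  also have "\<dots> \<le> integral UNIV gaussian"
    by (rule integral_subset_le) (auto simp: gaussian_def intro: rapidly_decreasing_integrable_on[OF g])
  finally have "2 * exp (- 1) \<le> integral UNIV gaussian" by simp
  then show ?thesis
    using exp_gt_zero[of "-1::real"] by linarith
qed

lemma lower_triangular_solve_step:
  fixes m :: "nat \<Rightarrow> nat \<Rightarrow> real"
  assumes d: "m (Suc L) (Suc L) \<noteq> 0" and "0 \<le> B"
    and solves: "\<And>i. i \<le> L \<Longrightarrow> (\<Sum>j\<le>i. c j * m i j) = r i"
    and bound: "\<And>j. j \<le> L \<Longrightarrow> \<bar>c j\<bar> \<le> B * S" and "\<bar>r (Suc L)\<bar> \<le> S"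
  defines "c' \<equiv> c(Suc L := (r (Suc L) - (\<Sum>j\<le>L. c j * m (Suc L) j)) / m (Suc L) (Suc L))"
  shows "\<And>i. i \<le> Suc L \<Longrightarrow> (\<Sum>j\<le>i. c' j * m i j) = r i"
    and "\<And>j. j \<le> Suc L \<Longrightarrow>
      \<bar>c' j\<bar> \<le> max B ((1 + B * (\<Sum>j\<le>L. \<bar>m (Suc L) j\<bar>)) / \<bar>m (Suc L) (Suc L)\<bar>) * S"
proof -
  have S: "0 \<le> S" using \<open>\<bar>r (Suc L)\<bar> \<le> S\<close> by linarith
  let ?B' = "max B ((1 + B * (\<Sum>j\<le>L. \<bar>m (Suc L) j\<bar>)) / \<bar>m (Suc L) (Suc L)\<bar>)"
  show "(\<Sum>j\<le>i. c' j * m i j) = r i" if "i \<le> Suc L" for i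
  proof (cases "i = Suc L")
    case True
    then show ?thesis using d by (simp add: c'_def)
  next
    case False
    then show ?thesis using that solves[of i] by (simp add: c'_def)
  qed
  show "\<bar>c' j\<bar> \<le> ?B' * S" if "j \<le> Suc L" for j
  proof (cases "j = Suc L")
    case True
    have "\<bar>r (Suc L) - (\<Sum>j\<le>L. c j * m (Suc L) j)\<bar> \<le> S + (\<Sum>j\<le>L. (B * S) * \<bar>m (Suc L) j\<bar>)"
    proof -
      have "\<bar>\<Sum>j\<le>L. c j * m (Suc L) j\<bar> \<le> (\<Sum>j\<le>L. \<bar>c j\<bar> * \<bar>m (Suc L) j\<bar>)"
        by (rule order_trans[OF sum_abs]) (simp add: abs_mult)
      also have "\<dots> \<le> (\<Sum>j\<le>L. (B * S) * \<bar>m (Suc L) j\<bar>)"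
        using bound by (intro sum_mono mult_right_mono) auto
      finally show ?thesis using \<open>\<bar>r (Suc L)\<bar> \<le> S\<close> by linarith
    qed
    also have "\<dots> = (1 + B * (\<Sum>j\<le>L. \<bar>m (Suc L) j\<bar>)) * S"
      by (simp add: sum_distrib_left algebra_simps)
    finally have "\<bar>c' (Suc L)\<bar> \<le> (1 + B * (\<Sum>j\<le>L. \<bar>m (Suc L) j\<bar>)) / \<bar>m (Suc L) (Suc L)\<bar> * S"
      using d by (simp add: c'_def abs_divide divide_right_mono)
    also have "\<dots> \<le> ?B' * S" using S by (intro mult_right_mono) auto
    finally show ?thesis using True by simp
  next
    case False
    then have "\<bar>c' j\<bar> \<le> B * S" using that bound[of j] by (simp add: c'_def)
    also have "\<dots> \<le> ?B' * S" using S by (intro mult_right_mono) auto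
    finally show ?thesis .
  qed
qed

lemma lower_triangular_solve_bounded:
  fixes m :: "nat \<Rightarrow> nat \<Rightarrow> real"
  assumes "\<And>i. m i i \<noteq> 0"
  shows "\<exists>B\<ge>0. \<forall>r. \<exists>c. (\<forall>i\<le>L. (\<Sum>j\<le>i. c j * m i j) = r i) \<and>
    (\<forall>j\<le>L. \<bar>c j\<bar> \<le> B * (\<Sum>i\<le>L. \<bar>r i\<bar>))"
proof (induction L)
  case 0
  have "\<bar>r 0 / m 0 0\<bar> \<le> 1 / \<bar>m 0 0\<bar> * \<bar>r 0\<bar>" for r :: "nat \<Rightarrow> real"
    by (simp add: abs_divide)
  then show ?case
    using assms[of 0] by (intro exI[of _ "1 / \<bar>m 0 0\<bar>"]) (auto intro!: exI[of _ "\<lambda>j. r 0 / m 0 0" for r])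
next
  case (Suc L)
  then obtain B where "0 \<le> B" and B: "\<And>r. \<exists>c. (\<forall>i\<le>L. (\<Sum>j\<le>i. c j * m i j) = r i) \<and>
      (\<forall>j\<le>L. \<bar>c j\<bar> \<le> B * (\<Sum>i\<le>L. \<bar>r i\<bar>))"
    by blast
  let ?B' = "max B ((1 + B * (\<Sum>j\<le>L. \<bar>m (Suc L) j\<bar>)) / \<bar>m (Suc L) (Suc L)\<bar>)"
  have "\<exists>c. (\<forall>i\<le>Suc L. (\<Sum>j\<le>i. c j * m i j) = r i) \<and>
      (\<forall>j\<le>Suc L. \<bar>c j\<bar> \<le> ?B' * (\<Sum>i\<le>Suc L. \<bar>r i\<bar>))" for r
  proof -
    obtain c where solves: "\<And>i. i \<le> L \<Longrightarrow> (\<Sum>j\<le>i. c j * m i j) = r i"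
      and bound: "\<And>j. j \<le> L \<Longrightarrow> \<bar>c j\<bar> \<le> B * (\<Sum>i\<le>L. \<bar>r i\<bar>)"
      using B[of r] by blast
    have "B * (\<Sum>i\<le>L. \<bar>r i\<bar>) \<le> B * (\<Sum>i\<le>Suc L. \<bar>r i\<bar>)"
      using \<open>0 \<le> B\<close> by (intro mult_left_mono) auto
    then have "\<And>j. j \<le> L \<Longrightarrow> \<bar>c j\<bar> \<le> B * (\<Sum>i\<le>Suc L. \<bar>r i\<bar>)"
      using bound by fastforce
    moreover have "\<bar>r (Suc L)\<bar> \<le> (\<Sum>i\<le>Suc L. \<bar>r i\<bar>)"
      by (rule member_le_sum) auto
    ultimately show ?thesis
      using lower_triangular_solve_step[OF assms \<open>0 \<le> B\<close> solves] by blast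
  qed
  then show ?case using \<open>0 \<le> B\<close> by (intro exI[of _ ?B']) auto
qed

section \<open>Construction of \<open>\<theta>\<close>\<close>

lemma has_real_derivative_x_sqrt_quotient:
  assumes F: "(F has_real_derivative F') (at y)" "0 < F y" and Q: "(Q has_real_derivative Q') (at y)" "0 < Q y"
  shows "((\<lambda>y. y * sqrt (F y) / (2 * sqrt (Q y))) has_real_derivative
    sqrt (F y) * (Q y - y * Q' / 2) / (2 * Q y * sqrt (Q y)) + y * F' / (4 * sqrt (F y) * sqrt (Q y))) (at y)"
proof -
  define S R where "S = sqrt (F y)" and "R = sqrt (Q y)"
  have S: "0 < S" "S\<^sup>2 = F y" and R: "0 < R" "R\<^sup>2 = Q y"
    using F(2) Q(2) by (auto simp: S_def R_def)
  show ?thesis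
    using F Q
    apply (auto intro!: derivative_eq_intros)
    \<comment> \<open>write the square roots as \<open>S\<close>, \<open>R\<close> and the radicands as \<open>S\<^sup>2\<close>, \<open>R\<^sup>2\<close>, so that they cancel\<close>
    apply (unfold S_def[symmetric] R_def[symmetric])
    apply (unfold S(2)[symmetric] R(2)[symmetric])
    using S(1) R(1) apply (simp add: field_simps power2_eq_square power3_eq_cube)
    done
qed

definition Qfun :: "real \<Rightarrow> real \<Rightarrow> real" where
  "Qfun lam y = lam\<^sup>2 * y\<^sup>2 + exp (- lam\<^sup>2 * y\<^sup>2)"

definition Qfun' :: "real \<Rightarrow> real \<Rightarrow> real" where
  "Qfun' lam y = 2 * lam\<^sup>2 * y * (1 - exp (- lam\<^sup>2 * y\<^sup>2))"

definition rho :: "(nat \<Rightarrow> real) \<Rightarrow> nat \<Rightarrow> real \<Rightarrow> real" where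
  "rho c L y = (\<Sum>j\<le>L. c j * (deriv ^^ (j + 2)) gaussian y)"

definition rho' :: "(nat \<Rightarrow> real) \<Rightarrow> nat \<Rightarrow> real \<Rightarrow> real" where
  "rho' c L y = (\<Sum>j\<le>L. c j * (deriv ^^ Suc (j + 2)) gaussian y)"

definition Ffun :: "real \<Rightarrow> (nat \<Rightarrow> real) \<Rightarrow> nat \<Rightarrow> real \<Rightarrow> real" where
  "Ffun lam c L y = lam\<^sup>2 + rho c L y * Qfun lam y"

definition Ffun' :: "real \<Rightarrow> (nat \<Rightarrow> real) \<Rightarrow> nat \<Rightarrow> real \<Rightarrow> real" where
  "Ffun' lam c L y = rho' c L y * Qfun lam y + rho c L y * Qfun' lam y"

definition Afun :: "real \<Rightarrow> (nat \<Rightarrow> real) \<Rightarrow> nat \<Rightarrow> real \<Rightarrow> real" where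
  "Afun lam c L y = y * sqrt (Ffun lam c L y) / (2 * sqrt (Qfun lam y))"

text \<open>\<open>thetafun\<close> is the derivative of \<open>Afun\<close>, simplified with
  \<open>Q - y Q' / 2 = exp(-lam\<^sup>2 y\<^sup>2) (1 + lam\<^sup>2 y\<^sup>2)\<close>.\<close>

definition thetafun :: "real \<Rightarrow> (nat \<Rightarrow> real) \<Rightarrow> nat \<Rightarrow> real \<Rightarrow> real" where
  "thetafun lam c L y =
     exp (- lam\<^sup>2 * y\<^sup>2) * (1 + lam\<^sup>2 * y\<^sup>2) * sqrt (Ffun lam c L y) /
       (2 * Qfun lam y * sqrt (Qfun lam y)) +
     y * Ffun' lam c L y / (4 * sqrt (Ffun lam c L y) * sqrt (Qfun lam y))"

lemma Qfun_ge_1: "1 \<le> Qfun lam y"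
  using exp_ge_add_one_self[of "- lam\<^sup>2 * y\<^sup>2"] by (simp add: Qfun_def)

lemma Qfun_has_real_derivative: "(Qfun lam has_real_derivative Qfun' lam y) (at y)"
  unfolding Qfun_def[abs_def] Qfun'_def
  by (auto intro!: derivative_eq_intros simp: power2_eq_square algebra_simps)

lemma Qfun_minus_half_deriv: "Qfun lam y - y * Qfun' lam y / 2 = exp (- lam\<^sup>2 * y\<^sup>2) * (1 + lam\<^sup>2 * y\<^sup>2)"
  unfolding Qfun_def Qfun'_def by (simp add: field_simps power2_eq_square)

lemma slowly_increasing_Qfun:
  assumes "lam \<noteq> 0"
  shows "slowly_increasing (Qfun lam)" "slowly_increasing (Qfun' lam)"
proof -
  have "slowly_increasing (\<lambda>y. lam\<^sup>2 * (y * y) + exp (- lam\<^sup>2 * y\<^sup>2 + 0 * y))"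
    "slowly_increasing (\<lambda>y. 2 * lam\<^sup>2 * y * (1 + (- 1) * exp (- lam\<^sup>2 * y\<^sup>2 + 0 * y)))"
    using assms by (intro slowly_increasing.intros; simp)+
  then show "slowly_increasing (Qfun lam)" "slowly_increasing (Qfun' lam)"
    by (simp_all add: Qfun_def[abs_def] Qfun'_def[abs_def] power2_eq_square)
qed

lemma gaussian_type_rho: "gaussian_type (rho c L)" "gaussian_type (rho' c L)"
  unfolding rho_def[abs_def] rho'_def[abs_def]
  by (intro gaussian_type_sum gaussian_type_cmult gaussian_type_iterated_deriv gaussian_type_gaussian;
      simp)+

lemma rho_has_real_derivative: "(rho c L has_real_derivative rho' c L y) (at y)"
  unfolding rho_def[abs_def] rho'_def
  by (intro DERIV_sum DERIV_cmult
      gaussian_type_has_real_derivative_iterated_deriv[OF gaussian_type_gaussian])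

lemma Ffun_has_real_derivative: "(Ffun lam c L has_real_derivative Ffun' lam c L y) (at y)"
  unfolding Ffun_def[abs_def] Ffun'_def
  by (auto intro!: derivative_eq_intros rho_has_real_derivative Qfun_has_real_derivative)

lemma slowly_increasing_Ffun:
  assumes "lam \<noteq> 0"
  shows "slowly_increasing (Ffun lam c L)" "gaussian_type (Ffun' lam c L)"
proof -
  have "slowly_increasing (\<lambda>y. lam\<^sup>2 + rho c L y * Qfun lam y)"
    using gaussian_type_slowly_increasing[OF gaussian_type_rho(1)] slowly_increasing_Qfun(1)[OF assms]
    by (intro slowly_increasing_add slowly_increasing_const slowly_increasing_mult)
  moreover have "gaussian_type (\<lambda>y. rho' c L y * Qfun lam y + rho c L y * Qfun' lam y)"
    using gaussian_type_rho slowly_increasing_Qfun[OF assms]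
    by (intro gaussian_type_add gaussian_type_mult(1))
  ultimately show "slowly_increasing (Ffun lam c L)" "gaussian_type (Ffun' lam c L)"
    unfolding Ffun_def[abs_def] Ffun'_def[abs_def] .
qed

definition Afun_sq_defect :: "real \<Rightarrow> (nat \<Rightarrow> real) \<Rightarrow> nat \<Rightarrow> real \<Rightarrow> real" where
  "Afun_sq_defect lam c L y = (y\<^sup>2 * rho c L y - exp (- lam\<^sup>2 * y\<^sup>2) / Qfun lam y) / 4"

lemma gaussian_type_Afun_sq_defect:
  assumes "lam \<noteq> 0"
  shows "gaussian_type (Afun_sq_defect lam c L)"
proof -
  have "gaussian_type (\<lambda>y. exp (- lam\<^sup>2 * y\<^sup>2) * (1 / Qfun lam y))"
    using assms by (intro gaussian_typeI slowly_increasing_inverse[OF _ _ Qfun_ge_1]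
        slowly_increasing_Qfun) simp_all
  then have "gaussian_type (\<lambda>y. 1/4 * (y ^ 2 * rho c L y + (- 1) * (exp (- lam\<^sup>2 * y\<^sup>2) * (1 / Qfun lam y))))"
    by (intro gaussian_type_cmult gaussian_type_add gaussian_type_mult_power gaussian_type_rho)
  then show ?thesis
    by (simp add: Afun_sq_defect_def[abs_def])
qed

context
  fixes lam :: real and c :: "nat \<Rightarrow> real" and L :: nat
  assumes lam: "1 \<le> lam" and F_ge: "\<And>y. 1/2 \<le> Ffun lam c L y"
begin

lemma Ffun_pos: "0 < Ffun lam c L y"
  using F_ge[of y] by linarith

lemma Qfun_pos: "0 < Qfun lam y"
  using Qfun_ge_1[of lam y] by linarith

lemma Afun_has_real_derivative: "(Afun lam c L has_real_derivative thetafun lam c L y) (at y)"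
  using has_real_derivative_x_sqrt_quotient[OF Ffun_has_real_derivative[of lam c L y] Ffun_pos
      Qfun_has_real_derivative[of lam y] Qfun_pos]
  unfolding Afun_def[abs_def] thetafun_def Qfun_minus_half_deriv by (simp add: ac_simps)

lemma slowly_increasing_Afun: "slowly_increasing (Afun lam c L)"
proof -
  have "slowly_increasing (\<lambda>y. y * sqrt (Ffun lam c L y) * (1/2) * (1 / sqrt (Qfun lam y)))"
    using lam F_ge Qfun_ge_1
    by (intro slowly_increasing.intros slowly_increasing_sqrt[of _ "1/2"] slowly_increasing_Ffun
        slowly_increasing_Qfun) auto
  then show ?thesis by (simp add: Afun_def[abs_def])
qed

lemma gaussian_type_thetafun: "gaussian_type (thetafun lam c L)"
proof -
  let ?sF = "\<lambda>y. sqrt (Ffun lam c L y)" and ?sQ = "\<lambda>y. sqrt (Qfun lam y)"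
  have F: "slowly_increasing (Ffun lam c L)" "gaussian_type (Ffun' lam c L)"
    and Q: "slowly_increasing (Qfun lam)" using lam slowly_increasing_Ffun slowly_increasing_Qfun by auto
  have sF: "slowly_increasing ?sF" "slowly_increasing (\<lambda>y. 1 / ?sF y)"
    using slowly_increasing_sqrt[OF F(1) _ F_ge] slowly_increasing_inverse_sqrt[OF F(1) _ F_ge]
    by simp_all
  have sQ: "slowly_increasing ?sQ" "slowly_increasing (\<lambda>y. 1 / ?sQ y)"
    "slowly_increasing (\<lambda>y. 1 / Qfun lam y)"
    using slowly_increasing_sqrt[OF Q _ Qfun_ge_1] slowly_increasing_inverse_sqrt[OF Q _ Qfun_ge_1]
      slowly_increasing_inverse[OF Q _ Qfun_ge_1] by simp_all
  have "gaussian_type (\<lambda>y. exp (- lam\<^sup>2 * y\<^sup>2) *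
      ((1 + lam\<^sup>2 * (y * y)) * ?sF y * (1/2) * (1 / Qfun lam y) * (1 / ?sQ y)) +
      Ffun' lam c L y * (y * (1/4) * (1 / ?sF y) * (1 / ?sQ y)))"
    using lam F(2) sF sQ by (intro gaussian_type_add gaussian_typeI gaussian_type_mult
        slowly_increasing_add slowly_increasing_mult slowly_increasing_const slowly_increasing_ident)
      auto
  then show ?thesis
    by (simp add: thetafun_def[abs_def] power2_eq_square mult_ac)
qed

lemma Afun_sq_minus_quarter: "(Afun lam c L y)\<^sup>2 - 1/4 = Afun_sq_defect lam c L y"
proof -
  define F Q E where "F = Ffun lam c L y" and "Q = Qfun lam y" and "E = exp (- lam\<^sup>2 * y\<^sup>2)"
  have "0 < F" "0 < Q" using Ffun_pos Qfun_pos by (simp_all add: F_def Q_def)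
  have "(Afun lam c L y)\<^sup>2 = y\<^sup>2 * F / (4 * Q)"
    using \<open>0 < F\<close> \<open>0 < Q\<close> by (simp add: Afun_def F_def Q_def power_divide power_mult_distrib)
  also have "\<dots> = y\<^sup>2 * rho c L y / 4 + (Q - E) / (4 * Q)"
    using \<open>0 < Q\<close> by (simp add: F_def Q_def E_def Ffun_def Qfun_def field_simps)
  also have "\<dots> = 1/4 + Afun_sq_defect lam c L y"
    using \<open>0 < Q\<close> by (simp add: Afun_sq_defect_def E_def Q_def field_simps)
  finally show ?thesis by simp
qed

lemma Afun_tendsto: "(Afun lam c L \<longlongrightarrow> 1/2) at_top" "(Afun lam c L \<longlongrightarrow> - 1/2) at_bot"
proof -
  have "rapidly_decreasing (Afun_sq_defect lam c L)"
    using lam by (intro gaussian_type_rapidly_decreasing gaussian_type_Afun_sq_defect) simp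
  note defect = rapidly_decreasing_tendsto_0[OF this]
  have sq: "((\<lambda>y. (Afun lam c L y)\<^sup>2) \<longlongrightarrow> 1/4) at_top" "((\<lambda>y. (Afun lam c L y)\<^sup>2) \<longlongrightarrow> 1/4) at_bot"
    using tendsto_add[OF defect(1) tendsto_const[of "1/4"]] tendsto_add[OF defect(2) tendsto_const[of "1/4"]]
    by (simp_all add: Afun_sq_minus_quarter[symmetric])
  have half: "sqrt (1/4) = (1/2::real)" by (simp add: real_sqrt_divide)
  have abs: "((\<lambda>y. \<bar>Afun lam c L y\<bar>) \<longlongrightarrow> 1/2) at_top" "((\<lambda>y. \<bar>Afun lam c L y\<bar>) \<longlongrightarrow> 1/2) at_bot"
    using tendsto_real_sqrt[OF sq(1)] tendsto_real_sqrt[OF sq(2)] by (simp_all only: real_sqrt_abs half)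
  have sign: "0 \<le> Afun lam c L y" if "0 \<le> y" for y
    using that Ffun_pos[of y] Qfun_pos[of y] by (simp add: Afun_def)
  have "Afun lam c L y \<le> 0" if "y \<le> 0" for y
    using that Ffun_pos[of y] Qfun_pos[of y] by (simp add: Afun_def divide_nonpos_pos mult_nonpos_nonneg)
  note sign = sign this
  have "eventually (\<lambda>y. \<bar>Afun lam c L y\<bar> = Afun lam c L y) at_top"
    using eventually_ge_at_top[of 0] by eventually_elim (simp add: sign)
  with abs(1) show "(Afun lam c L \<longlongrightarrow> 1/2) at_top" by (rule Lim_transform_eventually)
  have "eventually (\<lambda>y. - \<bar>Afun lam c L y\<bar> = Afun lam c L y) at_bot"
    using eventually_le_at_bot[of 0]
    by eventually_elim (simp add: sign abs_of_nonpos)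
  with tendsto_minus[OF abs(2)] show "(Afun lam c L \<longlongrightarrow> - 1/2) at_bot"
    by (auto intro: Lim_transform_eventually)
qed

lemma rapidly_decreasing_thetafun: "rapidly_decreasing (thetafun lam c L)"
  by (rule gaussian_type_rapidly_decreasing[OF gaussian_type_thetafun])

lemma thetafun_has_integral_1: "(thetafun lam c L has_integral 1) UNIV"
  using rapidly_decreasing_has_integral_FTC[OF rapidly_decreasing_thetafun Afun_has_real_derivative
      Afun_tendsto(2,1)] by simp

lemma Kfun_thetafun: "Kfun (thetafun lam c L) x = Afun lam c L x + 1/2"
proof -
  define d where "d y = Kfun (thetafun lam c L) y - Afun lam c L y" for y
  have "(d has_real_derivative 0) (at y)" for y
    using DERIV_diff[OF Kfun_has_real_derivative[OF rapidly_decreasing_thetafun] Afun_has_real_derivative]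
    by (simp add: d_def[abs_def])
  then have const: "d y = d x" for y
    using DERIV_isconst_all by blast
  have "(d \<longlongrightarrow> 1/2) at_bot"
    using tendsto_diff[OF Kfun_tendsto_at_bot[OF rapidly_decreasing_thetafun] Afun_tendsto(2)]
    by (simp add: d_def[abs_def])
  then have "((\<lambda>_::real. d x) \<longlongrightarrow> 1/2) at_bot"
    by (rule Lim_transform_eventually[OF _ always_eventually[OF allI[OF const]]])
  then show ?thesis by (simp add: tendsto_const_iff d_def)
qed

text \<open>Integration by parts: \<open>x\<^sup>k \<theta> A + k x\<^bsup>k-1\<^esup> (A\<^sup>2 - 1/4) / 2\<close> is the derivative of
  \<open>x\<^sup>k (A\<^sup>2 - 1/4) / 2\<close>, which vanishes at infinity.\<close>

lemma integral_power_mult_thetafun_Afun: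
  "integral UNIV (\<lambda>x. x ^ k * (thetafun lam c L x * Afun lam c L x)) =
     - (real k / 2) * integral UNIV (\<lambda>x. x ^ (k - 1) * Afun_sq_defect lam c L x)"
proof -
  let ?A = "Afun lam c L" and ?\<theta> = "thetafun lam c L" and ?E = "Afun_sq_defect lam c L"
  have E: "gaussian_type ?E" using lam by (intro gaussian_type_Afun_sq_defect) simp
  have "gaussian_type (\<lambda>x. ?\<theta> x * ?A x)"
    by (rule gaussian_type_mult(1)[OF gaussian_type_thetafun slowly_increasing_Afun])
  then have rd: "rapidly_decreasing (\<lambda>x. real k / 2 * (x ^ (k - 1) * ?E x))"
    "rapidly_decreasing (\<lambda>x. x ^ k * (?\<theta> x * ?A x))"
    by (intro gaussian_type_rapidly_decreasing gaussian_type_cmult gaussian_type_mult_power E)+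
  have FTC: "((\<lambda>x. real k / 2 * (x ^ (k - 1) * ?E x) + x ^ k * (?\<theta> x * ?A x)) has_integral (0 - 0)) UNIV"
  proof (rule rapidly_decreasing_has_integral_FTC[where F = "\<lambda>x. 1/2 * (x ^ k * ?E x)"])
    show "((\<lambda>x. 1/2 * (x ^ k * ?E x)) has_real_derivative
        real k / 2 * (x ^ (k - 1) * ?E x) + x ^ k * (?\<theta> x * ?A x)) (at x)" for x
      unfolding Afun_sq_minus_quarter[symmetric]
      using Afun_has_real_derivative[of x] by (auto intro!: derivative_eq_intros)
    have "rapidly_decreasing (\<lambda>x. 1/2 * (x ^ k * ?E x))"
      by (intro gaussian_type_rapidly_decreasing gaussian_type_cmult gaussian_type_mult_power E)
    then show "((\<lambda>x. 1/2 * (x ^ k * ?E x)) \<longlongrightarrow> 0) at_bot" "((\<lambda>x. 1/2 * (x ^ k * ?E x)) \<longlongrightarrow> 0) at_top"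
      using rapidly_decreasing_tendsto_0 by auto
  qed (rule rapidly_decreasing_add[OF rd])
  have "real k / 2 * integral UNIV (\<lambda>x. x ^ (k - 1) * ?E x) +
      integral UNIV (\<lambda>x. x ^ k * (?\<theta> x * ?A x)) = 0"
    using integral_unique[OF FTC] has_integral_integrable[OF rapidly_decreasing_has_integral[OF rd(1)]]
      has_integral_integrable[OF rapidly_decreasing_has_integral[OF rd(2)]]
    by (simp only: integral_add integral_mult_right diff_self)
  then show ?thesis by linarith
qed

lemma thetafun_moment_condition:
  assumes "k = 0 \<or> integral UNIV (\<lambda>x. x ^ (k - 1) * Afun_sq_defect lam c L x) = 0"
  shows "(1/2) * integral UNIV (\<lambda>x. x ^ k * thetafun lam c L x) =
    integral UNIV (\<lambda>x. x ^ k * thetafun lam c L x * Kfun (thetafun lam c L) x)"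
proof -
  let ?A = "Afun lam c L" and ?\<theta> = "thetafun lam c L"
  have "rapidly_decreasing (\<lambda>x. x ^ k * (?\<theta> x * ?A x))"
    by (intro gaussian_type_rapidly_decreasing gaussian_type_mult_power
        gaussian_type_mult(1)[OF gaussian_type_thetafun slowly_increasing_Afun])
  moreover have "integral UNIV (\<lambda>x. x ^ k * (?\<theta> x * ?A x)) = 0"
    using integral_power_mult_thetafun_Afun[of k] assms by auto
  ultimately have product: "((\<lambda>x. x ^ k * (?\<theta> x * ?A x)) has_integral 0) UNIV"
    using rapidly_decreasing_has_integral by metis
  have "((\<lambda>x. 1/2 * (x ^ k * ?\<theta> x)) has_integral 1/2 * integral UNIV (\<lambda>x. x ^ k * ?\<theta> x)) UNIV"
    by (intro has_integral_mult_right rapidly_decreasing_has_integral rapidly_decreasing_mult_power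
        rapidly_decreasing_thetafun)
  from has_integral_add[OF product this]
  have "((\<lambda>x. x ^ k * (?\<theta> x * ?A x) + 1/2 * (x ^ k * ?\<theta> x)) has_integral
      1/2 * integral UNIV (\<lambda>x. x ^ k * ?\<theta> x)) UNIV"
    by simp
  moreover have "x ^ k * (?\<theta> x * ?A x) + 1/2 * (x ^ k * ?\<theta> x) = x ^ k * ?\<theta> x * Kfun ?\<theta> x" for x
    unfolding Kfun_thetafun by (simp add: distrib_left distrib_right mult.assoc)
  ultimately show ?thesis by (simp add: integral_unique)
qed

end

definition gaussian_deriv_moment :: "nat \<Rightarrow> nat \<Rightarrow> real" where
  "gaussian_deriv_moment i j = integral UNIV (\<lambda>y. y ^ (i + 2) * (deriv ^^ (j + 2)) gaussian y)"

definition damped_moment :: "real \<Rightarrow> nat \<Rightarrow> real" where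
  "damped_moment lam i = integral UNIV (\<lambda>y. y ^ i * (exp (- lam\<^sup>2 * y\<^sup>2) / Qfun lam y))"

lemma gaussian_deriv_moment_eq_0: "i < j \<Longrightarrow> gaussian_deriv_moment i j = 0"
  unfolding gaussian_deriv_moment_def
  by (rule integral_power_mult_iterated_deriv_eq_0[OF gaussian_type_gaussian]) simp

lemma gaussian_deriv_moment_diag_ne_0: "gaussian_deriv_moment i i \<noteq> 0"
  unfolding gaussian_deriv_moment_def
  using integral_power_mult_iterated_deriv_same[OF gaussian_type_gaussian, of "i + 2"] integral_gaussian_pos
  by simp

lemma integral_power_mult_Afun_sq_defect:
  assumes "lam \<noteq> 0"
  shows "integral UNIV (\<lambda>y. y ^ i * Afun_sq_defect lam c L y) =
    ((\<Sum>j\<le>L. c j * gaussian_deriv_moment i j) - damped_moment lam i) / 4"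
proof -
  have moments: "((\<lambda>y. y ^ (i + 2) * (deriv ^^ (j + 2)) gaussian y) has_integral gaussian_deriv_moment i j) UNIV"
    for j unfolding gaussian_deriv_moment_def
    by (intro rapidly_decreasing_has_integral gaussian_type_rapidly_decreasing gaussian_type_mult_power
        gaussian_type_iterated_deriv gaussian_type_gaussian)
  have damped: "((\<lambda>y. y ^ i * (exp (- lam\<^sup>2 * y\<^sup>2) / Qfun lam y)) has_integral damped_moment lam i) UNIV"
  proof -
    have "gaussian_type (\<lambda>y. exp (- lam\<^sup>2 * y\<^sup>2) * (1 / Qfun lam y))"
      using assms by (intro gaussian_typeI slowly_increasing_inverse[OF _ _ Qfun_ge_1]
          slowly_increasing_Qfun) simp_all
    then have "rapidly_decreasing (\<lambda>y. y ^ i * (exp (- lam\<^sup>2 * y\<^sup>2) * (1 / Qfun lam y)))"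
      by (intro gaussian_type_rapidly_decreasing gaussian_type_mult_power)
    then show ?thesis
      unfolding damped_moment_def using rapidly_decreasing_has_integral by simp
  qed
  have "((\<lambda>y. ((\<Sum>j\<le>L. c j * (y ^ (i + 2) * (deriv ^^ (j + 2)) gaussian y)) -
      y ^ i * (exp (- lam\<^sup>2 * y\<^sup>2) / Qfun lam y)) / 4) has_integral
      ((\<Sum>j\<le>L. c j * gaussian_deriv_moment i j) - damped_moment lam i) / 4) UNIV"
    by (intro has_integral_divide has_integral_diff has_integral_sum has_integral_mult_right moments
        damped) simp
  moreover have "(\<lambda>y. y ^ i * Afun_sq_defect lam c L y) = (\<lambda>y.
      ((\<Sum>j\<le>L. c j * (y ^ (i + 2) * (deriv ^^ (j + 2)) gaussian y)) -
      y ^ i * (exp (- lam\<^sup>2 * y\<^sup>2) / Qfun lam y)) / 4)"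
  proof
    fix y
    have "y ^ i * (y\<^sup>2 * rho c L y) = (\<Sum>j\<le>L. c j * (y ^ (i + 2) * (deriv ^^ (j + 2)) gaussian y))"
      by (simp add: rho_def sum_distrib_left power_add power2_eq_square mult_ac)
    then show "y ^ i * Afun_sq_defect lam c L y = ((\<Sum>j\<le>L. c j * (y ^ (i + 2) * (deriv ^^ (j + 2)) gaussian y)) -
        y ^ i * (exp (- lam\<^sup>2 * y\<^sup>2) / Qfun lam y)) / 4"
      by (simp add: Afun_sq_defect_def right_diff_distrib)
  qed
  ultimately show ?thesis
    using integral_unique by metis
qed

lemma rapidly_decreasing_damped:
  assumes "lam \<noteq> 0"
  shows "rapidly_decreasing (\<lambda>y. y ^ i * (exp (- lam\<^sup>2 * y\<^sup>2) / Qfun lam y))"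
proof -
  have "gaussian_type (\<lambda>y. y ^ i * (exp (- lam\<^sup>2 * y\<^sup>2) * (1 / Qfun lam y)))"
    using assms by (intro gaussian_type_mult_power gaussian_typeI
        slowly_increasing_inverse[OF _ _ Qfun_ge_1] slowly_increasing_Qfun) simp_all
  then show ?thesis by (simp add: gaussian_type_rapidly_decreasing)
qed

lemma damped_moment_scaling:
  assumes "0 < lam"
  shows "damped_moment lam i = damped_moment 1 i / lam ^ Suc i"
proof -
  define h where "h z = z ^ i * (exp (- 1\<^sup>2 * z\<^sup>2) / Qfun 1 z)" for z
  define g where "g y = y ^ i * (exp (- lam\<^sup>2 * y\<^sup>2) / Qfun lam y)" for y
  have h_affine: "h (0 + lam * y) = lam ^ i * g y" for y
    by (simp add: h_def g_def Qfun_def power_mult_distrib)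
  have h: "integrable lborel h"
    using rapidly_decreasing_integrable[OF rapidly_decreasing_damped[of 1 i]] by (simp add: h_def[abs_def])
  have g: "integrable lborel g"
    using rapidly_decreasing_integrable[OF rapidly_decreasing_damped[of lam i]] assms
    by (simp add: g_def[abs_def])
  have "damped_moment 1 i = integral UNIV h"
    unfolding damped_moment_def h_def[abs_def] ..
  also have "\<dots> = (\<integral>z. h z \<partial>lborel)"
    by (rule integral_lborel[OF h])
  also have "\<dots> = lam * (\<integral>y. h (0 + lam * y) \<partial>lborel)"
    using lborel_integral_real_affine[of lam h 0] assms by simp
  also have "\<dots> = lam ^ Suc i * (\<integral>y. g y \<partial>lborel)"
    unfolding h_affine by simp
  also have "\<dots> = lam ^ Suc i * integral UNIV g"
    by (simp add: integral_lborel[OF g])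
  also have "\<dots> = lam ^ Suc i * damped_moment lam i"
    unfolding damped_moment_def g_def[abs_def] ..
  finally show ?thesis using assms by simp
qed

lemma abs_damped_moment_le:
  assumes "1 \<le> lam"
  shows "\<bar>damped_moment lam i\<bar> \<le> \<bar>damped_moment 1 i\<bar> / lam"
proof -
  have "lam \<le> lam ^ Suc i"
    using assms by (simp add: power_increasing[of 1 "Suc i" lam, simplified])
  then have "\<bar>damped_moment 1 i\<bar> / lam ^ Suc i \<le> \<bar>damped_moment 1 i\<bar> / lam"
    using assms by (intro divide_left_mono) auto
  then show ?thesis
    using assms by (simp add: damped_moment_scaling[of lam i] abs_divide)
qed

lemma Ffun_ge_half:
  assumes "1 \<le> lam" and P: "\<And>j y. (1 + y\<^sup>2) * \<bar>(deriv ^^ (j + 2)) gaussian y\<bar> \<le> P j"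
    and small: "(\<Sum>j\<le>L. \<bar>c j\<bar> * P j) \<le> 1/2"
  shows "1/2 \<le> Ffun lam c L y"
proof -
  have "Qfun lam y \<le> lam\<^sup>2 * (1 + y\<^sup>2)"
    using assms(1) by (simp add: Qfun_def algebra_simps one_le_power order_trans[OF _ one_le_power])
  moreover have "\<bar>rho c L y\<bar> \<le> (\<Sum>j\<le>L. \<bar>c j\<bar> * \<bar>(deriv ^^ (j + 2)) gaussian y\<bar>)"
    unfolding rho_def by (rule order_trans[OF sum_abs]) (simp add: abs_mult)
  moreover have "0 \<le> Qfun lam y" using Qfun_ge_1[of lam y] by linarith
  ultimately have "\<bar>rho c L y * Qfun lam y\<bar> \<le>
      (\<Sum>j\<le>L. \<bar>c j\<bar> * \<bar>(deriv ^^ (j + 2)) gaussian y\<bar>) * (lam\<^sup>2 * (1 + y\<^sup>2))"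
    unfolding abs_mult by (intro mult_mono) auto
  also have "\<dots> = lam\<^sup>2 * (\<Sum>j\<le>L. \<bar>c j\<bar> * ((1 + y\<^sup>2) * \<bar>(deriv ^^ (j + 2)) gaussian y\<bar>))"
    by (simp add: sum_distrib_left sum_distrib_right mult_ac)
  also have "\<dots> \<le> lam\<^sup>2 * (\<Sum>j\<le>L. \<bar>c j\<bar> * P j)"
    by (intro mult_left_mono sum_mono P) auto
  also have "\<dots> \<le> lam\<^sup>2 / 2" using mult_left_mono[OF small, of "lam\<^sup>2"] by simp
  finally have "\<bar>rho c L y * Qfun lam y\<bar> \<le> lam\<^sup>2 / 2" .
  moreover have "1 \<le> lam\<^sup>2" using assms(1) by (simp add: one_le_power)
  ultimately show ?thesis unfolding Ffun_def by linarith
qed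

lemma exists_moment_coefficients:
  "\<exists>lam c. 1 \<le> lam \<and> (\<forall>y. 1/2 \<le> Ffun lam c L y) \<and>
     (\<forall>i\<le>L. (\<Sum>j\<le>L. c j * gaussian_deriv_moment i j) = damped_moment lam i)"
proof -
  obtain B where "0 \<le> B" and B: "\<And>r. \<exists>c. (\<forall>i\<le>L. (\<Sum>j\<le>i. c j * gaussian_deriv_moment i j) = r i) \<and>
      (\<forall>j\<le>L. \<bar>c j\<bar> \<le> B * (\<Sum>i\<le>L. \<bar>r i\<bar>))"
    using lower_triangular_solve_bounded[where m = gaussian_deriv_moment, OF gaussian_deriv_moment_diag_ne_0]
    by blast
  have "\<exists>C. \<forall>y. (1 + y\<^sup>2) * \<bar>(deriv ^^ (j + 2)) gaussian y\<bar> \<le> C" for j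
    by (intro rapidly_decreasing_weighted_bound gaussian_type_rapidly_decreasing
        gaussian_type_iterated_deriv gaussian_type_gaussian)
  then obtain P where P: "\<And>j y. (1 + y\<^sup>2) * \<bar>(deriv ^^ (j + 2)) gaussian y\<bar> \<le> P j"
    by metis
  have "0 \<le> P j" for j
    using P[where j = j and y = 0] abs_ge_zero[of "(deriv ^^ (j + 2)) gaussian 0"] by simp
  define R where "R = (\<Sum>i\<le>L. \<bar>damped_moment 1 i\<bar>)"
  define lam where "lam = max 1 (2 * B * R * (\<Sum>j\<le>L. P j))"
  have lam: "1 \<le> lam" and "0 < lam" and lam_ge: "2 * (B * R * (\<Sum>j\<le>L. P j)) \<le> lam"
    by (simp_all add: lam_def)
  obtain c where solves: "\<And>i. i \<le> L \<Longrightarrow> (\<Sum>j\<le>i. c j * gaussian_deriv_moment i j) = damped_moment lam i"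
    and c: "\<And>j. j \<le> L \<Longrightarrow> \<bar>c j\<bar> \<le> B * (\<Sum>i\<le>L. \<bar>damped_moment lam i\<bar>)"
    using B[of "damped_moment lam"] by blast
  have "(\<Sum>i\<le>L. \<bar>damped_moment lam i\<bar>) \<le> R / lam"
    unfolding R_def sum_divide_distrib by (intro sum_mono abs_damped_moment_le lam)
  then have "\<bar>c j\<bar> \<le> B * R / lam" if "j \<le> L" for j
    using c[OF that] mult_left_mono[OF \<open>(\<Sum>i\<le>L. \<bar>damped_moment lam i\<bar>) \<le> R / lam\<close> \<open>0 \<le> B\<close>]
    by simp
  then have "(\<Sum>j\<le>L. \<bar>c j\<bar> * P j) \<le> (\<Sum>j\<le>L. B * R / lam * P j)"
    using \<open>\<And>j. 0 \<le> P j\<close> by (intro sum_mono mult_right_mono) auto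
  also have "\<dots> = B * R * (\<Sum>j\<le>L. P j) / lam"
    by (simp add: sum_distrib_left sum_divide_distrib)
  also have "\<dots> \<le> 1/2"
    using lam_ge \<open>0 < lam\<close> by (simp add: pos_divide_le_eq)
  finally have "\<And>y. 1/2 \<le> Ffun lam c L y"
    by (intro Ffun_ge_half[OF lam P])
  moreover have "(\<Sum>j\<le>L. c j * gaussian_deriv_moment i j) = damped_moment lam i" if "i \<le> L" for i
  proof -
    have "(\<Sum>j\<le>L. c j * gaussian_deriv_moment i j) = (\<Sum>j\<le>i. c j * gaussian_deriv_moment i j)"
      using that by (intro sum.mono_neutral_right) (auto simp: gaussian_deriv_moment_eq_0)
    then show ?thesis using solves[OF that] by simp
  qed
  ultimately show ?thesis using lam by blast
qed

lemma exists_theta_moment_conditions: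
  "\<exists>\<theta>. schwartz \<theta> \<and> (\<theta> has_integral 1) UNIV \<and>
     (\<forall>k<l. (1/2) * integral UNIV (\<lambda>x. x ^ k * \<theta> x) = integral UNIV (\<lambda>x. x ^ k * \<theta> x * Kfun \<theta> x))"
proof -
  obtain lam c where lam: "1 \<le> lam" and F: "\<And>y. 1/2 \<le> Ffun lam c l y"
    and moments: "\<And>i. i \<le> l \<Longrightarrow> (\<Sum>j\<le>l. c j * gaussian_deriv_moment i j) = damped_moment lam i"
    using exists_moment_coefficients[of l] by blast
  have "integral UNIV (\<lambda>x. x ^ i * Afun_sq_defect lam c l x) = 0" if "i \<le> l" for i
    using integral_power_mult_Afun_sq_defect[of lam i c l] moments[OF that] lam by simp
  then have "(1/2) * integral UNIV (\<lambda>x. x ^ k * thetafun lam c l x) =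
      integral UNIV (\<lambda>x. x ^ k * thetafun lam c l x * Kfun (thetafun lam c l) x)" if "k < l" for k
    using that by (intro thetafun_moment_condition[OF lam F]) auto
  moreover have "schwartz (thetafun lam c l)"
    by (rule gaussian_type_schwartz[OF gaussian_type_thetafun[OF lam F]])
  ultimately show ?thesis
    using thetafun_has_integral_1[OF lam F] by blast
qed

theorem mainTheorem3:
  fixes T :: real and l :: nat
  assumes "0 \<le> T"
  shows "(\<exists>\<theta>. schwartz \<theta> \<and> (\<theta> has_integral 1) UNIV \<and>
            (\<forall>h0 dh. dh \<noteq> 0 \<longrightarrow> hopf_solution_upto (shock_wave \<theta> h0 dh (h0 + dh / 2)) T l) \<and>
            (\<forall>k<l. (1/2) * integral UNIV (\<lambda>x. x ^ k * \<theta> x)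
                     = integral UNIV (\<lambda>x. x ^ k * \<theta> x * Kfun \<theta> x)))
       \<and> (\<forall>\<theta>. schwartz \<theta> \<and> (\<theta> has_integral 1) UNIV \<longrightarrow>
            ((\<forall>h0 dh. dh \<noteq> 0 \<longrightarrow> hopf_solution_upto (shock_wave \<theta> h0 dh (h0 + dh / 2)) T l)
             \<longleftrightarrow> (\<forall>k<l. (1/2) * integral UNIV (\<lambda>x. x ^ k * \<theta> x)
                     = integral UNIV (\<lambda>x. x ^ k * \<theta> x * Kfun \<theta> x))))
       \<and> (1 \<le> l \<longrightarrow> (\<forall>\<theta> h0 dh a. schwartz \<theta> \<and> (\<theta> has_integral 1) UNIV \<and> dh \<noteq> 0 \<and>
            hopf_solution_upto (shock_wave \<theta> h0 dh a) T l \<longrightarrow> (a - h0) / dh = 1/2))"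
proof (intro conjI allI impI)
  note iff = shock_wave_hopf_solution_upto_iff[OF schwartz_rapidly_decreasing assms]
  show "\<exists>\<theta>. schwartz \<theta> \<and> (\<theta> has_integral 1) UNIV \<and>
      (\<forall>h0 dh. dh \<noteq> 0 \<longrightarrow> hopf_solution_upto (shock_wave \<theta> h0 dh (h0 + dh / 2)) T l) \<and>
      (\<forall>k<l. (1/2) * integral UNIV (\<lambda>x. x ^ k * \<theta> x) = integral UNIV (\<lambda>x. x ^ k * \<theta> x * Kfun \<theta> x))"
    using exists_theta_moment_conditions[of l] iff by blast
  fix \<theta> :: "real \<Rightarrow> real"
  show "schwartz \<theta> \<and> (\<theta> has_integral 1) UNIV \<Longrightarrow>
      (\<forall>h0 dh. dh \<noteq> 0 \<longrightarrow> hopf_solution_upto (shock_wave \<theta> h0 dh (h0 + dh / 2)) T l) \<longleftrightarrow>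
      (\<forall>k<l. (1/2) * integral UNIV (\<lambda>x. x ^ k * \<theta> x) = integral UNIV (\<lambda>x. x ^ k * \<theta> x * Kfun \<theta> x))"
    using iff by blast
  fix h0 dh a
  show "1 \<le> l \<Longrightarrow> schwartz \<theta> \<and> (\<theta> has_integral 1) UNIV \<and> dh \<noteq> 0 \<and>
      hopf_solution_upto (shock_wave \<theta> h0 dh a) T l \<Longrightarrow> (a - h0) / dh = 1/2"
    using shock_wave_rankine_hugoniot[OF schwartz_rapidly_decreasing _ _ assms] by blast
qed

end
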